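(* Let $\mathbf{k}$ be a commutative ring and $H$ a commutative connected graded $\mathbf{k}$-Hopf algebra. Let $\beta_H:H\to H\otimes\mathrm{QSym}_{\mathbf{k}}$ be defined by $\beta_H(h)=\sum_{\alpha\in\mathrm{Comp}}\xi_\alpha(h)\otimes M_\alpha$. (a) $\beta_H$ is a $\mathbf{k}$-algebra homomorphism and a graded $(\mathbf{k},H)$-coalgebra homomorphism. (b) $(\mathrm{id}_H\otimes\varepsilon_P)\circ\beta_H=\mathrm{id}_H$ (identifying $H\otimes\mathbf{k}$ with $H$). (c) $(\beta_H\otimes\mathrm{id}_{\mathrm{QSym}_{\mathbf{k}}})\circ\beta_H=(\mathrm{id}_H\otimes\Delta'_P)\circ\beta_H$ as maps $H\to H\otimes\mathrm{QSym}_{\mathbf{k}}\otimes\mathrm{QSym}_{\mathbf{k}}$. (d) If the $\mathbf{k}$-coalgebra $H$ is cocommutative, then $\beta_H(H)\subseteq H\otimes\Lambda_{\mathbf{k}}$, where $\Lambda_{\mathbf{k}}\subseteq\mathrm{QSym}_{\mathbf{k}}$ is the algebra of symmetric functions.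
   Context: Unadorned tensor products are over $\mathbf{k}$; graded means $\mathbb{N}$-graded, connected means $H_0\cong\mathbf{k}$ via the counit. A composition is a finite sequence of positive integers; $\mathrm{Comp}$ the set of compositions. $\mathrm{QSym}_{\mathbf{k}}\subseteq\mathbf{k}[[x_1,x_2,\ldots]]$ is the Hopf algebra of quasisymmetric functions with monomial basis $M_\alpha=\sum_{1\le i_1<\cdots<i_\ell}x_{i_1}^{\alpha_1}\cdots x_{i_\ell}^{\alpha_\ell}$ (for $\alpha=(\alpha_1,\ldots,\alpha_\ell)$, degree $\alpha_1+\cdots+\alpha_\ell$), with $\Delta(M_{(b_1,\ldots,b_\ell)})=\sum_{i=0}^\ell M_{(b_1,\ldots,b_i)}\otimes M_{(b_{i+1},\ldots,b_\ell)}$; $\varepsilon_P:\mathrm{QSym}_{\mathbf{k}}\to\mathbf{k}$, $f\mapsto f(1,0,0,\ldots)$. For $\alpha=(a_1,\ldots,a_k)$, $\xi_\alpha=m^{(k-1)}\circ\pi_\alpha\circ\Delta^{(k-1)}:H\to H$, where $\Delta^{(k-1)}:H\to H^{\otimes k}$ is the iterated comultiplication ($\Delta^{(-1)}=\varepsilon$, $\Delta^{(0)}=\mathrm{id}$, $\Delta^{(k)}=(\mathrm{id}\otimes\Delta^{(k-1)})\circ\Delta$), $m^{(k-1)}:H^{\otimes k}\to H$ is $h_1\otimes\cdots\otimes h_k\mapsto h_1\cdots h_k$ ($m^{(-1)}$ the unit), and $\pi_\alpha=\pi_{a_1}\otimes\cdots\otimes\pi_{a_k}$ with $\pi_n:H\to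 H$ the projection onto $H_n$. The sum defining $\beta_H(h)$ is finite. Second comultiplication: for $A=(a_{i,j})\in\mathbb{N}^{u\times v}$, $\mathrm{column}\,A$ is the $v$-tuple of column sums, $\mathrm{row}\,A$ the $u$-tuple of row sums, $\mathrm{read}\,A=(a_{1,1},\ldots,a_{1,v},\ldots,a_{u,1},\ldots,a_{u,v})$; $A$ is reduced if no row and no column is zero; $\mathbb{N}^{\bullet,\bullet}_{\mathrm{red}}$ is the set of all reduced matrices of all sizes; $w^{\mathrm{red}}$ is $w$ with zero entries removed. $\Delta_P$ is the $\mathbf{k}$-linear map $M_\gamma\mapsto\sum_{A\in\mathbb{N}^{\bullet,\bullet}_{\mathrm{red}},(\mathrm{read}\,A)^{\mathrm{red}}=\gamma}M_{\mathrm{row}\,A}\otimes M_{\mathrm{column}\,A}$, and $\Delta'_P=\tau\circ\Delta_P$ with $\tau$ the twist $x\otimes y\mapsto y\otimes x$. Extension of scalars: $H\otimes\mathrm{QSym}_{\mathbf{k}}$ is regarded as an $H$-module via $a(b\otimes q)=ab\otimes q$, an $H$-algebra, and an $H$-coalgebra with comultiplication $\mathrm{id}_H\otimes\Delta$ (identifying $H\otimes(Q\otimes Q)\cong(H\otimes Q)\otimes_H(H\otimes Q)$) and counit $\mathrm{id}_H\otimes\varepsilon$, graded by $(H\otimes\mathrm{QSym}_{\mathbf{k}})_n=H\otimes(\mathrm{QSym}_{\mathbf{k}})_n$ (the grading and coalgebra structure of the left factor $H$ are ignored). Also $H\otimes H$ (scalars extended to the left factor) is an $H$-coalgebra in the same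 way. A $\mathbf{k}$-linear $f:H\to G$ into an $H$-coalgebra $G$ is a $(\mathbf{k},H)$-coalgebra homomorphism if $f^\sharp:H\otimes H\to G$, $a\otimes h\mapsto af(h)$, is an $H$-coalgebra homomorphism; graded means $\beta_H(H_n)\subseteq H\otimes(\mathrm{QSym}_{\mathbf{k}})_n$. *)

theory Defs
  imports Main HOL.Modules "HOL-Library.Poly_Mapping" "HOL-Library.Multiset"
begin

text \<open>The Hopf algebra H is a type 'h::comm_ring_1
 (its commutative ring structure) with a k-module structure sc.  Elements of the k-tensor product
 H (x) H are represented by finitely supported formal k-linear combinations of pairs, i.e. by
 elements of ('h * 'h) =>0 'k; two representatives denote the same tensor iff their difference
 lies in the k-submodule tens2 sc generated by the bilinearity relations.\<close>

inductive_set tens2 :: "('k::comm_ring_1 \<Rightarrow> 'h::ab_group_add \<Rightarrow> 'h) \<Rightarrow> (('h \<times> 'h) \<Rightarrow>\<^sub>0 'k) set"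
  for sc where
  t2_zero: "0 \<in> tens2 sc"
| t2_addl: "Poly_Mapping.single (x + x', y) 1 - Poly_Mapping.single (x, y) 1
              - Poly_Mapping.single (x', y) 1 \<in> tens2 sc"
| t2_addr: "Poly_Mapping.single (x, y + y') 1 - Poly_Mapping.single (x, y) 1
              - Poly_Mapping.single (x, y') 1 \<in> tens2 sc"
| t2_scl: "Poly_Mapping.single (sc c x, y) 1 - Poly_Mapping.single (x, y) c \<in> tens2 sc"
| t2_scr: "Poly_Mapping.single (x, sc c y) 1 - Poly_Mapping.single (x, y) c \<in> tens2 sc"
| t2_add: "p \<in> tens2 sc \<Longrightarrow> q \<in> tens2 sc \<Longrightarrow> p + q \<in> tens2 sc"
| t2_smul: "p \<in> tens2 sc \<Longrightarrow> Poly_Mapping.map ((*) c) p \<in> tens2 sc"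

inductive_set tens3 :: "('k::comm_ring_1 \<Rightarrow> 'h::ab_group_add \<Rightarrow> 'h) \<Rightarrow> (('h \<times> 'h \<times> 'h) \<Rightarrow>\<^sub>0 'k) set"
  for sc where
  t3_zero: "0 \<in> tens3 sc"
| t3_add1: "Poly_Mapping.single (x + x', y, z) 1 - Poly_Mapping.single (x, y, z) 1
              - Poly_Mapping.single (x', y, z) 1 \<in> tens3 sc"
| t3_add2: "Poly_Mapping.single (x, y + y', z) 1 - Poly_Mapping.single (x, y, z) 1
              - Poly_Mapping.single (x, y', z) 1 \<in> tens3 sc"
| t3_add3: "Poly_Mapping.single (x, y, z + z') 1 - Poly_Mapping.single (x, y, z) 1
              - Poly_Mapping.single (x, y, z') 1 \<in> tens3 sc"
| t3_sc1: "Poly_Mapping.single (sc c x, y, z) 1 - Poly_Mapping.single (x, y, z) c \<in> tens3 sc"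
| t3_sc2: "Poly_Mapping.single (x, sc c y, z) 1 - Poly_Mapping.single (x, y, z) c \<in> tens3 sc"
| t3_sc3: "Poly_Mapping.single (x, y, sc c z) 1 - Poly_Mapping.single (x, y, z) c \<in> tens3 sc"
| t3_add: "p \<in> tens3 sc \<Longrightarrow> q \<in> tens3 sc \<Longrightarrow> p + q \<in> tens3 sc"
| t3_smul: "p \<in> tens3 sc \<Longrightarrow> Poly_Mapping.map ((*) c) p \<in> tens3 sc"

definition teq2 :: "('k::comm_ring_1 \<Rightarrow> 'h::ab_group_add \<Rightarrow> 'h) \<Rightarrow> (('h \<times> 'h) \<Rightarrow>\<^sub>0 'k) \<Rightarrow> (('h \<times> 'h) \<Rightarrow>\<^sub>0 'k) \<Rightarrow> bool"
  where "teq2 sc s t \<longleftrightarrow> s - t \<in> tens2 sc"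

definition teq3 :: "('k::comm_ring_1 \<Rightarrow> 'h::ab_group_add \<Rightarrow> 'h) \<Rightarrow> (('h \<times> 'h \<times> 'h) \<Rightarrow>\<^sub>0 'k) \<Rightarrow> (('h \<times> 'h \<times> 'h) \<Rightarrow>\<^sub>0 'k) \<Rightarrow> bool"
  where "teq3 sc s t \<longleftrightarrow> s - t \<in> tens3 sc"

definition tlift2 :: "('k::comm_ring_1 \<Rightarrow> 'h \<Rightarrow> 'h) \<Rightarrow> ('h \<Rightarrow> 'h \<Rightarrow> 'h::comm_ring_1)
     \<Rightarrow> (('h \<times> 'h) \<Rightarrow>\<^sub>0 'k) \<Rightarrow> 'h" where
  "tlift2 sc b t = (\<Sum>p\<in>Poly_Mapping.keys t. sc (Poly_Mapping.lookup t p) (b (fst p) (snd p)))"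

definition tmult2 :: "(('h::comm_ring_1 \<times> 'h) \<Rightarrow>\<^sub>0 'k::comm_ring_1) \<Rightarrow> (('h \<times> 'h) \<Rightarrow>\<^sub>0 'k) \<Rightarrow> (('h \<times> 'h) \<Rightarrow>\<^sub>0 'k)" where
  "tmult2 s t = (\<Sum>p\<in>Poly_Mapping.keys s. \<Sum>q\<in>Poly_Mapping.keys t.
       Poly_Mapping.single (fst p * fst q, snd p * snd q) (Poly_Mapping.lookup s p * Poly_Mapping.lookup t q))"

definition tswap2 :: "(('h \<times> 'h) \<Rightarrow>\<^sub>0 'k::comm_ring_1) \<Rightarrow> (('h \<times> 'h) \<Rightarrow>\<^sub>0 'k)" where
  "tswap2 t = (\<Sum>p\<in>Poly_Mapping.keys t. Poly_Mapping.single (snd p, fst p) (Poly_Mapping.lookup t p))"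

definition comul_left :: "('h \<Rightarrow> ('h \<times> 'h) \<Rightarrow>\<^sub>0 'k::comm_ring_1) \<Rightarrow> (('h \<times> 'h) \<Rightarrow>\<^sub>0 'k) \<Rightarrow> (('h \<times> 'h \<times> 'h) \<Rightarrow>\<^sub>0 'k)" where
  "comul_left D t = (\<Sum>p\<in>Poly_Mapping.keys t. \<Sum>q\<in>Poly_Mapping.keys (D (fst p)).
       Poly_Mapping.single (fst q, snd q, snd p) (Poly_Mapping.lookup t p * Poly_Mapping.lookup (D (fst p)) q))"

definition comul_right :: "('h \<Rightarrow> ('h \<times> 'h) \<Rightarrow>\<^sub>0 'k::comm_ring_1) \<Rightarrow> (('h \<times> 'h) \<Rightarrow>\<^sub>0 'k) \<Rightarrow> (('h \<times> 'h \<times> 'h) \<Rightarrow>\<^sub>0 'k)" where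
  "comul_right D t = (\<Sum>p\<in>Poly_Mapping.keys t. \<Sum>q\<in>Poly_Mapping.keys (D (snd p)).
       Poly_Mapping.single (fst p, fst q, snd q) (Poly_Mapping.lookup t p * Poly_Mapping.lookup (D (snd p)) q))"

definition klinear :: "('k::comm_ring_1 \<Rightarrow> 'h::ab_group_add \<Rightarrow> 'h) \<Rightarrow> ('h \<Rightarrow> 'h) \<Rightarrow> bool" where
  "klinear sc f \<longleftrightarrow> (\<forall>x y. f (x + y) = f x + f y) \<and> (\<forall>c x. f (sc c x) = sc c (f x))"

definition ksubmodule :: "('k::comm_ring_1 \<Rightarrow> 'h::ab_group_add \<Rightarrow> 'h) \<Rightarrow> 'h set \<Rightarrow> bool" where
  "ksubmodule sc V \<longleftrightarrow> 0 \<in> V \<and> (\<forall>x\<in>V. \<forall>y\<in>V. x + y \<in> V) \<and> (\<forall>c. \<forall>x\<in>V. sc c x \<in> V)"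

definition graded_decomp :: "('k::comm_ring_1 \<Rightarrow> 'h::ab_group_add \<Rightarrow> 'h) \<Rightarrow> (nat \<Rightarrow> 'h set) \<Rightarrow> bool" where
  "graded_decomp sc Hn \<longleftrightarrow> (\<forall>n. ksubmodule sc (Hn n)) \<and>
     (\<forall>x. \<exists>!f. (\<forall>n. f n \<in> Hn n) \<and> finite {n. f n \<noteq> 0} \<and> x = (\<Sum>n\<in>{n. f n \<noteq> 0}. f n))"

definition proj :: "(nat \<Rightarrow> 'h::ab_group_add set) \<Rightarrow> nat \<Rightarrow> 'h \<Rightarrow> 'h" where
  "proj Hn n x = (THE f. (\<forall>m. f m \<in> Hn m) \<and> finite {m. f m \<noteq> 0} \<and> x = (\<Sum>m\<in>{m. f m \<noteq> 0}. f m)) n"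

text \<open>Data: k-module structure sc on the commutative ring 'h, grading Hn, comultiplication D
 (with values representatives of elements of H (x) H), counit e.\<close>
definition comm_conn_graded_hopf ::
  "('k::comm_ring_1 \<Rightarrow> 'h::comm_ring_1 \<Rightarrow> 'h) \<Rightarrow> (nat \<Rightarrow> 'h set) \<Rightarrow> ('h \<Rightarrow> ('h \<times> 'h) \<Rightarrow>\<^sub>0 'k) \<Rightarrow> ('h \<Rightarrow> 'k) \<Rightarrow> bool"
where
  "comm_conn_graded_hopf sc Hn D e \<longleftrightarrow>
     \<comment> \<open>commutative k-algebra\<close>
     module sc \<and> (\<forall>c x y. sc c (x * y) = sc c x * y) \<and>
     \<comment> \<open>grading, compatible with the algebra structure\<close>
     graded_decomp sc Hn \<and> 1 \<in> Hn 0 \<and> (\<forall>i j x y. x \<in> Hn i \<longrightarrow> y \<in> Hn j \<longrightarrow> x * y \<in> Hn (i + j)) \<and>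
     \<comment> \<open>k-linearity of comultiplication and counit\<close>
     (\<forall>x y. teq2 sc (D (x + y)) (D x + D y)) \<and>
     (\<forall>c x. teq2 sc (D (sc c x)) (Poly_Mapping.map ((*) c) (D x))) \<and>
     (\<forall>x y. e (x + y) = e x + e y) \<and> (\<forall>c x. e (sc c x) = c * e x) \<and>
     \<comment> \<open>coalgebra axioms\<close>
     (\<forall>x. teq3 sc (comul_left D (D x)) (comul_right D (D x))) \<and>
     (\<forall>x. tlift2 sc (\<lambda>a b. sc (e a) b) (D x) = x) \<and>
     (\<forall>x. tlift2 sc (\<lambda>a b. sc (e b) a) (D x) = x) \<and>
     \<comment> \<open>bialgebra axioms\<close>
     (\<forall>x y. teq2 sc (D (x * y)) (tmult2 (D x) (D y))) \<and>
     teq2 sc (D 1) (Poly_Mapping.single (1, 1) 1) \<and>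
     (\<forall>x y. e (x * y) = e x * e y) \<and> e 1 = 1 \<and>
     \<comment> \<open>graded coalgebra\<close>
     (\<forall>n x. x \<in> Hn n \<longrightarrow> (\<exists>t. teq2 sc (D x) t \<and>
         (\<forall>p\<in>Poly_Mapping.keys t. \<exists>i j. i + j = n \<and> fst p \<in> Hn i \<and> snd p \<in> Hn j))) \<and>
     (\<forall>n x. n > 0 \<longrightarrow> x \<in> Hn n \<longrightarrow> e x = 0) \<and>
     \<comment> \<open>connected: H_0 isomorphic to k via the counit\<close>
     bij_betw e (Hn 0) UNIV \<and>
     \<comment> \<open>antipode\<close>
     (\<exists>S. klinear sc S \<and>
        (\<forall>x. tlift2 sc (\<lambda>a b. S a * b) (D x) = sc (e x) 1) \<and>
        (\<forall>x. tlift2 sc (\<lambda>a b. a * S b) (D x) = sc (e x) 1))"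

definition cocommutative :: "('k::comm_ring_1 \<Rightarrow> 'h::comm_ring_1 \<Rightarrow> 'h) \<Rightarrow> ('h \<Rightarrow> ('h \<times> 'h) \<Rightarrow>\<^sub>0 'k) \<Rightarrow> bool" where
  "cocommutative sc D \<longleftrightarrow> (\<forall>x. teq2 sc (tswap2 (D x)) (D x))"

definition conv :: "('k::comm_ring_1 \<Rightarrow> 'h::comm_ring_1 \<Rightarrow> 'h) \<Rightarrow> ('h \<Rightarrow> ('h \<times> 'h) \<Rightarrow>\<^sub>0 'k)
    \<Rightarrow> ('h \<Rightarrow> 'h) \<Rightarrow> ('h \<Rightarrow> 'h) \<Rightarrow> 'h \<Rightarrow> 'h" where
  "conv sc D f g x = tlift2 sc (\<lambda>a b. f a * g b) (D x)"

text \<open>xi_alpha = m^(k-1) o pi_alpha o Delta^(k-1); with Delta^(k) = (id (x) Delta^(k-1)) o Delta this is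
 xi_() = unit o counit, xi_(a) = pi_a, xi_(a,b,...) = m o (pi_a (x) xi_(b,...)) o Delta.\<close>
fun xi :: "('k::comm_ring_1 \<Rightarrow> 'h::comm_ring_1 \<Rightarrow> 'h) \<Rightarrow> (nat \<Rightarrow> 'h set) \<Rightarrow> ('h \<Rightarrow> ('h \<times> 'h) \<Rightarrow>\<^sub>0 'k)
    \<Rightarrow> ('h \<Rightarrow> 'k) \<Rightarrow> nat list \<Rightarrow> 'h \<Rightarrow> 'h" where
  "xi sc Hn D e [] = (\<lambda>x. sc (e x) 1)"
| "xi sc Hn D e [a] = proj Hn a"
| "xi sc Hn D e (a # b # rest) = conv sc D (proj Hn a) (xi sc Hn D e (b # rest))"

definition is_comp :: "nat list \<Rightarrow> bool" where
  "is_comp \<alpha> \<longleftrightarrow> (\<forall>x\<in>set \<alpha>. 0 < x)"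

text \<open>Since QSym is k-free on the M_alpha, an element of H (x) QSym is written uniquely as
 sum_alpha u(alpha) (x) M_alpha; we represent it by the coefficient function u (zero off
 compositions).  Similarly H (x) QSym (x) QSym by functions on pairs of compositions.\<close>

definition betaH :: "('k::comm_ring_1 \<Rightarrow> 'h::comm_ring_1 \<Rightarrow> 'h) \<Rightarrow> (nat \<Rightarrow> 'h set) \<Rightarrow> ('h \<Rightarrow> ('h \<times> 'h) \<Rightarrow>\<^sub>0 'k)
    \<Rightarrow> ('h \<Rightarrow> 'k) \<Rightarrow> 'h \<Rightarrow> nat list \<Rightarrow> 'h" where
  "betaH sc Hn D e h \<alpha> = (if is_comp \<alpha> then xi sc Hn D e \<alpha> h else 0)"

text \<open>Quasi-shuffle (stuffle) product: M_alpha M_beta = sum over gamma in stuffle alpha beta of M_gamma.\<close>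
fun stuffle :: "nat list \<Rightarrow> nat list \<Rightarrow> nat list multiset" where
  "stuffle [] ys = {#ys#}"
| "stuffle xs [] = {#xs#}"
| "stuffle (x # xs) (y # ys) =
     image_mset ((#) x) (stuffle xs (y # ys)) + image_mset ((#) y) (stuffle (x # xs) ys)
     + image_mset ((#) (x + y)) (stuffle xs ys)"

definition qprod :: "(nat list \<Rightarrow> 'h::comm_ring_1) \<Rightarrow> (nat list \<Rightarrow> 'h) \<Rightarrow> nat list \<Rightarrow> 'h" where
  "qprod u v \<gamma> = (\<Sum>p\<in>{(\<alpha>, \<beta>). is_comp \<alpha> \<and> is_comp \<beta> \<and> sum_list \<alpha> + sum_list \<beta> = sum_list \<gamma>}.
      of_nat (count (stuffle (fst p) (snd p)) \<gamma>) * (u (fst p) * v (snd p)))"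

definition qone :: "nat list \<Rightarrow> 'h::comm_ring_1" where
  "qone \<alpha> = (if \<alpha> = [] then 1 else 0)"

text \<open>Comultiplication id_H (x) Delta of H (x) QSym into H (x) QSym (x) QSym:
 Delta(M_gamma) = sum of deconcatenations.\<close>
definition qcomul :: "(nat list \<Rightarrow> 'h::comm_ring_1) \<Rightarrow> nat list \<times> nat list \<Rightarrow> 'h" where
  "qcomul u p = (if is_comp (fst p) \<and> is_comp (snd p) then u (fst p @ snd p) else 0)"

definition qcounit :: "(nat list \<Rightarrow> 'h::comm_ring_1) \<Rightarrow> 'h" where
  "qcounit u = u []"

text \<open>id_H (x) epsilon_P, epsilon_P(M_alpha) = M_alpha(1,0,0,...) = (1 if length alpha <= 1, else 0).\<close>
definition qepsP :: "(nat list \<Rightarrow> 'h::comm_ring_1) \<Rightarrow> 'h" where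
  "qepsP u = (\<Sum>\<alpha>\<in>{\<alpha>. u \<alpha> \<noteq> 0}. if length \<alpha> \<le> 1 then u \<alpha> else 0)"

text \<open>Matrices in N^{u x v}: lists of u rows, each of length v.\<close>
definition colsums :: "nat \<Rightarrow> nat list list \<Rightarrow> nat list" where
  "colsums v A = map (\<lambda>j. sum_list (map (\<lambda>r. r ! j) A)) [0..<v]"

definition reduced_mat :: "nat \<Rightarrow> nat list list \<Rightarrow> bool" where
  "reduced_mat v A \<longleftrightarrow> (\<forall>r\<in>set A. length r = v) \<and> (\<forall>r\<in>set A. \<exists>x\<in>set r. x \<noteq> 0)
      \<and> (\<forall>j<v. \<exists>r\<in>set A. r ! j \<noteq> 0)"

definition red_mats :: "nat list \<Rightarrow> nat list \<Rightarrow> nat list list set" where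
  "red_mats \<alpha> \<gamma> = {A. reduced_mat (length \<alpha>) A \<and> map sum_list A = \<gamma> \<and> colsums (length \<alpha>) A = \<alpha>}"

text \<open>(id_H (x) Delta'_P) u, Delta'_P = tau o Delta_P, as coefficient function: the coefficient of
 M_alpha (x) M_gamma is the sum over reduced A with column A = alpha, row A = gamma of
 u((read A)^red).\<close>
definition qDeltaP' :: "(nat list \<Rightarrow> 'h::comm_ring_1) \<Rightarrow> nat list \<times> nat list \<Rightarrow> 'h" where
  "qDeltaP' u p = (\<Sum>A\<in>red_mats (fst p) (snd p). u (filter (\<lambda>x. x \<noteq> 0) (concat A)))"

text \<open>H (x) Lambda inside H (x) QSym: elements sum_lambda c_lambda (x) m_lambda, where
 m_lambda = sum of M_alpha over the rearrangements alpha of the partition lambda.\<close>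
definition in_H_Lambda :: "(nat list \<Rightarrow> 'h::comm_ring_1) \<Rightarrow> bool" where
  "in_H_Lambda u \<longleftrightarrow> (\<exists>c. \<forall>\<alpha>. is_comp \<alpha> \<longrightarrow> u \<alpha> = c (mset \<alpha>))"

definition fsharp :: "('k::comm_ring_1 \<Rightarrow> 'h::comm_ring_1 \<Rightarrow> 'h) \<Rightarrow> ('h \<Rightarrow> nat list \<Rightarrow> 'h)
    \<Rightarrow> (('h \<times> 'h) \<Rightarrow>\<^sub>0 'k) \<Rightarrow> nat list \<Rightarrow> 'h" where
  "fsharp sc f t \<alpha> = (\<Sum>p\<in>Poly_Mapping.keys t. sc (Poly_Mapping.lookup t p) (fst p * f (snd p) \<alpha>))"

text \<open>Comultiplication id_H (x) Delta of the H-coalgebra H (x) H, landing in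
 (H (x) H) (x)_H (H (x) H) = H (x) H (x) H: a (x) h |-> sum a (x) h_(1) (x) h_(2).\<close>
definition HH_comul :: "('h \<Rightarrow> ('h \<times> 'h) \<Rightarrow>\<^sub>0 'k::comm_ring_1) \<Rightarrow> (('h \<times> 'h) \<Rightarrow>\<^sub>0 'k) \<Rightarrow> (('h \<times> 'h \<times> 'h) \<Rightarrow>\<^sub>0 'k)" where
  "HH_comul D t = comul_right D t"

definition HH_counit :: "('k::comm_ring_1 \<Rightarrow> 'h::comm_ring_1 \<Rightarrow> 'h) \<Rightarrow> ('h \<Rightarrow> 'k) \<Rightarrow> (('h \<times> 'h) \<Rightarrow>\<^sub>0 'k) \<Rightarrow> 'h" where
  "HH_counit sc e t = tlift2 sc (\<lambda>a b. sc (e b) a) t"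

definition fsharp2 :: "('k::comm_ring_1 \<Rightarrow> 'h::comm_ring_1 \<Rightarrow> 'h) \<Rightarrow> ('h \<Rightarrow> nat list \<Rightarrow> 'h)
    \<Rightarrow> (('h \<times> 'h \<times> 'h) \<Rightarrow>\<^sub>0 'k) \<Rightarrow> nat list \<times> nat list \<Rightarrow> 'h" where
  "fsharp2 sc f s p = (\<Sum>q\<in>Poly_Mapping.keys s. sc (Poly_Mapping.lookup s q)
       (fst q * f (fst (snd q)) (fst p) * f (snd (snd q)) (snd p)))"

definition kH_coalg_hom :: "('k::comm_ring_1 \<Rightarrow> 'h::comm_ring_1 \<Rightarrow> 'h) \<Rightarrow> ('h \<Rightarrow> ('h \<times> 'h) \<Rightarrow>\<^sub>0 'k)
    \<Rightarrow> ('h \<Rightarrow> 'k) \<Rightarrow> ('h \<Rightarrow> nat list \<Rightarrow> 'h) \<Rightarrow> bool" where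
  "kH_coalg_hom sc D e f \<longleftrightarrow>
     (\<forall>t. qcomul (fsharp sc f t) = fsharp2 sc f (HH_comul D t)) \<and>
     (\<forall>t. qcounit (fsharp sc f t) = HH_counit sc e t)"

end

theory Submission
  imports Defs
begin

text \<open>Write \<open>\<xi>\<^sub>\<alpha> = \<pi>\<^sub>a\<^sub>1 \<star> \<dots> \<star> \<pi>\<^sub>a\<^sub>k\<close> as a convolution product of the graded
  projections.  By coassociativity \<open>\<xi>\<^sub>\<alpha>\<^sub>\<gamma> = \<xi>\<^sub>\<alpha> \<star> \<xi>\<^sub>\<gamma>\<close>, which is the coalgebra part of (a);
  since \<open>H\<close> is connected, \<open>\<pi>\<^sub>0 = u \<epsilon>\<close> is the convolution unit, so parts equal to \<open>0\<close> may be
  inserted into or deleted from \<open>\<alpha>\<close> at will.  As \<open>\<Delta>\<close> is multiplicative and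
  \<open>\<pi>\<^sub>c (x y) = \<Sum>\<^sub>i \<pi>\<^sub>i x \<pi>\<^sub>c\<^sub>-\<^sub>i y\<close>, the value \<open>\<xi>\<^sub>\<alpha>(x y)\<close> is the sum of \<open>\<xi>\<^sub>\<beta>(x) \<xi>\<^sub>\<alpha>\<^sub>-\<^sub>\<beta>(y)\<close> over
  all \<open>\<beta> \<le> \<alpha>\<close> (componentwise); after deleting zero parts, the pairs so obtained are counted
  exactly by the quasi-shuffle coefficients of \<open>M\<^sub>\<beta> M\<^sub>\<beta>\<^sub>'\<close>, which is multiplicativity.
  Iterating this expansion, \<open>\<xi>\<^sub>\<alpha> \<circ> \<xi>\<^sub>\<gamma>\<close> is the sum of \<open>\<xi>\<^bsub>read A\<^esub>\<close> over all matrices \<open>A\<close> in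
  \<open>\<nat>\<close> with column sums \<open>\<alpha>\<close> and row sums \<open>\<gamma>\<close>, which is (c).  Part (b) is \<open>\<Sum>\<^sub>n \<pi>\<^sub>n = id\<close>,
  and for (d) cocommutativity makes convolution commutative, so that \<open>\<xi>\<^sub>\<alpha>\<close> only depends on
  the multiset of parts of \<open>\<alpha>\<close>.\<close>

section \<open>Linear extension from free modules\<close>

definition lincomb :: "('k::comm_ring_1 \<Rightarrow> 'm::ab_group_add \<Rightarrow> 'm) \<Rightarrow> ('x \<Rightarrow> 'm) \<Rightarrow> ('x \<Rightarrow>\<^sub>0 'k) \<Rightarrow> 'm"
  where "lincomb sc b t = (\<Sum>p\<in>Poly_Mapping.keys t. sc (Poly_Mapping.lookup t p) (b p))"

definition kbilinear :: "('k::comm_ring_1 \<Rightarrow> 'm::ab_group_add \<Rightarrow> 'm) \<Rightarrow> ('m \<Rightarrow> 'm \<Rightarrow> 'm) \<Rightarrow> bool"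
  where "kbilinear sc b \<longleftrightarrow>
    (\<forall>x x' y. b (x + x') y = b x y + b x' y) \<and> (\<forall>x y y'. b x (y + y') = b x y + b x y') \<and>
    (\<forall>c x y. b (sc c x) y = sc c (b x y)) \<and> (\<forall>c x y. b x (sc c y) = sc c (b x y))"

definition ktrilinear :: "('k::comm_ring_1 \<Rightarrow> 'm::ab_group_add \<Rightarrow> 'm) \<Rightarrow> ('m \<Rightarrow> 'm \<Rightarrow> 'm \<Rightarrow> 'm) \<Rightarrow> bool"
  where "ktrilinear sc b \<longleftrightarrow>
    (\<forall>x x' y z. b (x + x') y z = b x y z + b x' y z) \<and>
    (\<forall>x y y' z. b x (y + y') z = b x y z + b x y' z) \<and>
    (\<forall>x y z z'. b x y (z + z') = b x y z + b x y z') \<and>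
    (\<forall>c x y z. b (sc c x) y z = sc c (b x y z)) \<and> (\<forall>c x y z. b x (sc c y) z = sc c (b x y z)) \<and>
    (\<forall>c x y z. b x y (sc c z) = sc c (b x y z))"

lemma tlift2_eq_lincomb: "tlift2 sc b t = lincomb sc (\<lambda>q. b (fst q) (snd q)) t"
  by (simp add: tlift2_def lincomb_def)

lemma lookup_map_mult:
  "Poly_Mapping.lookup (Poly_Mapping.map ((*) (c::'k::comm_ring_1)) t) p = c * Poly_Mapping.lookup t p"
  by (simp add: Poly_Mapping.map.rep_eq when_def)

lemma keys_map_mult:
  "Poly_Mapping.keys (Poly_Mapping.map ((*) (c::'k::comm_ring_1)) t) \<subseteq> Poly_Mapping.keys t"
  by (auto simp: in_keys_iff lookup_map_mult)

lemma lincomb_cong: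
  "(\<And>p. p \<in> Poly_Mapping.keys t \<Longrightarrow> b p = b' p) \<Longrightarrow> lincomb sc b t = lincomb sc b' t"
  by (simp add: lincomb_def)

lemma lincomb_zero [simp]: "lincomb sc b 0 = 0"
  by (simp add: lincomb_def)

lemma klinear_add: "klinear sc g \<Longrightarrow> g (x + y) = g x + g y"
  by (simp add: klinear_def)

lemma klinear_scale: "klinear sc g \<Longrightarrow> g (sc c x) = sc c (g x)"
  by (simp add: klinear_def)

lemma klinear_sum: "klinear sc g \<Longrightarrow> g (sum f A) = (\<Sum>i\<in>A. g (f i))"
proof -
  assume "klinear sc g"
  then interpret additive g by unfold_locales (rule klinear_add)
  show ?thesis by (rule sum)
qed

lemma klinear_zero: "klinear sc g \<Longrightarrow> g 0 = 0"
  using klinear_sum[of sc g _ "{}"] by simp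

lemma klinear_lincomb: "klinear sc g \<Longrightarrow> g (lincomb sc b t) = lincomb sc (\<lambda>p. g (b p)) t"
  by (simp add: lincomb_def klinear_sum klinear_scale)

context module
begin

lemma lincomb_single [simp]: "lincomb scale b (Poly_Mapping.single p c) = scale c (b p)"
  by (simp add: lincomb_def)

lemma lincomb_eq_0: "(\<And>p. p \<in> Poly_Mapping.keys t \<Longrightarrow> b p = 0) \<Longrightarrow> lincomb scale b t = 0"
  by (simp add: lincomb_def)

lemma lincomb_superset:
  assumes "finite S" "Poly_Mapping.keys t \<subseteq> S"
  shows "lincomb scale b t = (\<Sum>p\<in>S. scale (Poly_Mapping.lookup t p) (b p))"
  unfolding lincomb_def by (rule sum.mono_neutral_left) (use assms in \<open>auto simp: in_keys_iff\<close>)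

lemma lincomb_add: "lincomb scale b (s + t) = lincomb scale b s + lincomb scale b t"
proof -
  let ?S = "Poly_Mapping.keys s \<union> Poly_Mapping.keys t"
  have "lincomb scale b (s + t) = (\<Sum>p\<in>?S. scale (Poly_Mapping.lookup (s + t) p) (b p))"
    by (rule lincomb_superset) (simp_all add: keys_add)
  moreover have "lincomb scale b s = (\<Sum>p\<in>?S. scale (Poly_Mapping.lookup s p) (b p))"
    by (rule lincomb_superset) simp_all
  moreover have "lincomb scale b t = (\<Sum>p\<in>?S. scale (Poly_Mapping.lookup t p) (b p))"
    by (rule lincomb_superset) simp_all
  ultimately show ?thesis by (simp add: lookup_add scale_left_distrib sum.distrib)
qed

lemma lincomb_diff: "lincomb scale b (s - t) = lincomb scale b s - lincomb scale b t"
  using lincomb_add[of b "s - t" t] by (simp add: eq_diff_eq)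

lemma lincomb_sum: "lincomb scale b (sum f A) = (\<Sum>i\<in>A. lincomb scale b (f i))"
  by (induct A rule: infinite_finite_induct) (auto simp: lincomb_add)

lemma lincomb_map_mult: "lincomb scale b (Poly_Mapping.map ((*) c) t) = scale c (lincomb scale b t)"
proof -
  have "lincomb scale b (Poly_Mapping.map ((*) c) t) =
      (\<Sum>p\<in>Poly_Mapping.keys t. scale (Poly_Mapping.lookup (Poly_Mapping.map ((*) c) t) p) (b p))"
    by (rule lincomb_superset) (auto simp: keys_map_mult)
  then show ?thesis by (simp add: lincomb_def lookup_map_mult scale_sum_right)
qed

lemma lincomb_sum_fun: "lincomb scale (\<lambda>p. \<Sum>i\<in>A. b i p) t = (\<Sum>i\<in>A. lincomb scale (b i) t)"
  unfolding lincomb_def scale_sum_right by (rule sum.swap)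

lemma lincomb_tens2:
  assumes "kbilinear scale b" "p \<in> tens2 scale"
  shows "lincomb scale (\<lambda>q. b (fst q) (snd q)) p = 0"
  using assms(2)
  by induct (use assms(1) in \<open>simp_all add: kbilinear_def lincomb_add lincomb_diff lincomb_map_mult\<close>)

lemma lincomb_tens3:
  assumes "ktrilinear scale b" "p \<in> tens3 scale"
  shows "lincomb scale (\<lambda>q. b (fst q) (fst (snd q)) (snd (snd q))) p = 0"
  using assms(2)
  by induct (use assms(1) in \<open>simp_all add: ktrilinear_def lincomb_add lincomb_diff lincomb_map_mult\<close>)

lemma lincomb_teq2:
  assumes "kbilinear scale b" "teq2 scale s t"
  shows "lincomb scale (\<lambda>q. b (fst q) (snd q)) s = lincomb scale (\<lambda>q. b (fst q) (snd q)) t"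
  using lincomb_tens2[OF assms(1), of "s - t"] assms(2) by (simp add: teq2_def lincomb_diff)

lemma lincomb_teq3:
  assumes "ktrilinear scale b" "teq3 scale s t"
  shows "lincomb scale (\<lambda>q. b (fst q) (fst (snd q)) (snd (snd q))) s =
    lincomb scale (\<lambda>q. b (fst q) (fst (snd q)) (snd (snd q))) t"
  using lincomb_tens3[OF assms(1), of "s - t"] assms(2) by (simp add: teq3_def lincomb_diff)

lemma lincomb_comul_left:
  "lincomb scale b (comul_left D t) =
    lincomb scale (\<lambda>p. lincomb scale (\<lambda>q. b (fst q, snd q, snd p)) (D (fst p))) t"
  unfolding comul_left_def lincomb_sum lincomb_single by (simp add: lincomb_def scale_sum_right)

lemma lincomb_comul_right:
  "lincomb scale b (comul_right D t) =
    lincomb scale (\<lambda>p. lincomb scale (\<lambda>q. b (fst p, fst q, snd q)) (D (snd p))) t"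
  unfolding comul_right_def lincomb_sum lincomb_single by (simp add: lincomb_def scale_sum_right)

lemma lincomb_tmult2:
  "lincomb scale b (tmult2 s t) =
    lincomb scale (\<lambda>p. lincomb scale (\<lambda>q. b (fst p * fst q, snd p * snd q)) t) s"
  unfolding tmult2_def lincomb_sum lincomb_single by (simp add: lincomb_def scale_sum_right)

lemma lincomb_tswap2: "lincomb scale b (tswap2 t) = lincomb scale (\<lambda>q. b (snd q, fst q)) t"
  unfolding tswap2_def lincomb_sum lincomb_single by (simp add: lincomb_def)

end
section \<open>The Hopf algebra axioms and the graded projections\<close>

locale cc_graded_hopf =
  fixes sc :: "'k::comm_ring_1 \<Rightarrow> 'h::comm_ring_1 \<Rightarrow> 'h" and Hn :: "nat \<Rightarrow> 'h set"
    and D :: "'h \<Rightarrow> ('h \<times> 'h) \<Rightarrow>\<^sub>0 'k" and e :: "'h \<Rightarrow> 'k"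
  assumes hopf: "comm_conn_graded_hopf sc Hn D e"
begin

lemmas hopf_axioms = hopf[unfolded comm_conn_graded_hopf_def]

sublocale module sc
  using hopf_axioms by simp

lemma scale_mult_left: "sc c (x * y) = sc c x * y"
  using hopf_axioms by simp

lemma scale_mult_right: "sc c (x * y) = x * sc c y"
  using scale_mult_left[of c y x] by (simp add: mult.commute)

lemma mult_scale_commute: "x * sc c y = sc c x * y"
  by (metis scale_mult_left scale_mult_right)

lemma graded: "graded_decomp sc Hn"
  using hopf_axioms by simp

lemma one_in_H0: "1 \<in> Hn 0"
  using hopf_axioms by simp

lemma mult_in_Hn: "x \<in> Hn i \<Longrightarrow> y \<in> Hn j \<Longrightarrow> x * y \<in> Hn (i + j)"
  using hopf_axioms by simp

lemma comul_add: "teq2 sc (D (x + y)) (D x + D y)"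
  using hopf_axioms by simp

lemma comul_scale: "teq2 sc (D (sc c x)) (Poly_Mapping.map ((*) c) (D x))"
  using hopf_axioms by simp

lemma comul_mult: "teq2 sc (D (x * y)) (tmult2 (D x) (D y))"
  using hopf_axioms by simp

lemma coassoc: "teq3 sc (comul_left D (D x)) (comul_right D (D x))"
  using hopf_axioms by simp

lemma comul_graded:
  "x \<in> Hn n \<Longrightarrow> \<exists>t. teq2 sc (D x) t \<and>
     (\<forall>p\<in>Poly_Mapping.keys t. \<exists>i j. i + j = n \<and> fst p \<in> Hn i \<and> snd p \<in> Hn j)"
  using hopf_axioms by simp

lemma counit_add: "e (x + y) = e x + e y"
  using hopf_axioms by simp

lemma counit_scale: "e (sc c x) = c * e x"
  using hopf_axioms by simp

lemma counit_mult: "e (x * y) = e x * e y"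
  using hopf_axioms by simp

lemma counit_one: "e 1 = 1"
  using hopf_axioms by simp

lemma counit_left: "tlift2 sc (\<lambda>a b. sc (e a) b) (D x) = x"
  using hopf_axioms by simp

lemma counit_right: "tlift2 sc (\<lambda>a b. sc (e b) a) (D x) = x"
  using hopf_axioms by simp

lemma counit_Hn_pos: "0 < n \<Longrightarrow> x \<in> Hn n \<Longrightarrow> e x = 0"
  using hopf_axioms by simp

lemma counit_bij_H0: "bij_betw e (Hn 0) UNIV"
  using hopf_axioms by simp

lemma counit_sum: "e (sum f A) = (\<Sum>i\<in>A. e (f i))"
proof -
  interpret additive e by standard (rule counit_add)
  show ?thesis by (rule sum)
qed

lemma ksubmodule_Hn: "ksubmodule sc (Hn n)"
  using graded by (simp add: graded_decomp_def)

lemma zero_in_Hn: "0 \<in> Hn n"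
  using ksubmodule_Hn[of n] by (simp add: ksubmodule_def)

lemma add_in_Hn: "x \<in> Hn n \<Longrightarrow> y \<in> Hn n \<Longrightarrow> x + y \<in> Hn n"
  using ksubmodule_Hn[of n] by (simp add: ksubmodule_def)

lemma scale_in_Hn: "x \<in> Hn n \<Longrightarrow> sc c x \<in> Hn n"
  using ksubmodule_Hn[of n] by (simp add: ksubmodule_def)

definition homog_decomp :: "'h \<Rightarrow> (nat \<Rightarrow> 'h) \<Rightarrow> bool"
  where "homog_decomp x f \<longleftrightarrow>
    (\<forall>n. f n \<in> Hn n) \<and> finite {n. f n \<noteq> 0} \<and> x = (\<Sum>n\<in>{n. f n \<noteq> 0}. f n)"

lemma ex1_homog_decomp: "\<exists>!f. homog_decomp x f"
  using graded unfolding graded_decomp_def homog_decomp_def by blast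

lemma proj_eq_homog_decomp: "homog_decomp x f \<Longrightarrow> proj Hn n x = f n"
  unfolding proj_def homog_decomp_def[symmetric]
  using the1_equality[OF ex1_homog_decomp] by metis

lemma homog_decomp_proj: "homog_decomp x (\<lambda>n. proj Hn n x)"
  using theI'[OF ex1_homog_decomp, of x]
  unfolding proj_def homog_decomp_def[symmetric] by (simp add: eta_contract_eq)

lemma proj_in_Hn: "proj Hn n x \<in> Hn n"
  using homog_decomp_proj[of x] by (simp add: homog_decomp_def)

lemma finite_proj_nonzero: "finite {n. proj Hn n x \<noteq> 0}"
  using homog_decomp_proj[of x] by (simp add: homog_decomp_def)

lemma sum_proj_superset:
  assumes "finite S" "{n. proj Hn n x \<noteq> 0} \<subseteq> S"
  shows "x = (\<Sum>n\<in>S. proj Hn n x)"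
proof -
  have "(\<Sum>n\<in>S. proj Hn n x) = (\<Sum>n | proj Hn n x \<noteq> 0. proj Hn n x)"
    by (rule sum.mono_neutral_right) (use assms in auto)
  then show ?thesis
    using homog_decomp_proj[of x] by (simp add: homog_decomp_def)
qed

lemma homog_decompI:
  assumes "\<And>n. f n \<in> Hn n" "finite S" "{n. f n \<noteq> 0} \<subseteq> S" "x = sum f S"
  shows "homog_decomp x f"
  using assms finite_subset[OF assms(3,2)] sum.mono_neutral_right[OF assms(2,3)]
  by (auto simp: homog_decomp_def)

lemma proj_add: "proj Hn n (x + y) = proj Hn n x + proj Hn n y"
proof -
  let ?S = "{n. proj Hn n x \<noteq> 0} \<union> {n. proj Hn n y \<noteq> 0}"
  have "homog_decomp (x + y) (\<lambda>n. proj Hn n x + proj Hn n y)"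
  proof (rule homog_decompI[where S = ?S])
    show "x + y = (\<Sum>n\<in>?S. proj Hn n x + proj Hn n y)"
      using sum_proj_superset[of ?S x] sum_proj_superset[of ?S y] finite_proj_nonzero[of x]
        finite_proj_nonzero[of y]
      by (simp add: sum.distrib)
  qed (auto simp: proj_in_Hn add_in_Hn finite_proj_nonzero)
  then show ?thesis by (rule proj_eq_homog_decomp)
qed

lemma proj_scale: "proj Hn n (sc c x) = sc c (proj Hn n x)"
proof -
  let ?S = "{n. proj Hn n x \<noteq> 0}"
  have "homog_decomp (sc c x) (\<lambda>n. sc c (proj Hn n x))"
  proof (rule homog_decompI[where S = ?S])
    show "sc c x = (\<Sum>n\<in>?S. sc c (proj Hn n x))"
      using sum_proj_superset[of ?S x] finite_proj_nonzero[of x] by (simp flip: scale_sum_right)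
  qed (auto simp: proj_in_Hn scale_in_Hn finite_proj_nonzero)
  then show ?thesis by (rule proj_eq_homog_decomp)
qed

lemma klinear_proj: "klinear sc (proj Hn n)"
  by (simp add: klinear_def proj_add proj_scale)

lemma proj_Hn: "x \<in> Hn m \<Longrightarrow> proj Hn n x = (if n = m then x else 0)"
  by (rule proj_eq_homog_decomp, rule homog_decompI[where S = "{m}"]) (auto simp: zero_in_Hn)

lemma proj_eventually_zero: "\<exists>N. \<forall>n>N. proj Hn n x = 0"
  using finite_proj_nonzero[of x] finite_nat_set_iff_bounded_le
  by (metis (mono_tags) mem_Collect_eq not_le)

lemma sum_proj_atMost: "\<forall>n>N. proj Hn n x = 0 \<Longrightarrow> x = (\<Sum>n\<le>N. proj Hn n x)"
  by (rule sum_proj_superset) (auto simp: not_le[symmetric])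

text \<open>Connectedness gives \<open>\<pi>\<^sub>0 = u \<epsilon>\<close>: \<open>\<epsilon>\<close> vanishes in positive degrees and is injective on \<open>H\<^sub>0\<close>.\<close>

lemma counit_proj0: "e x = e (proj Hn 0 x)"
proof -
  obtain N where N: "\<forall>n>N. proj Hn n x = 0"
    using proj_eventually_zero by blast
  have "e x = (\<Sum>n\<le>N. e (proj Hn n x))"
    using sum_proj_atMost[OF N] counit_sum by metis
  also have "\<dots> = (\<Sum>n\<le>N. if n = 0 then e (proj Hn 0 x) else 0)"
    by (rule sum.cong) (auto simp: counit_Hn_pos proj_in_Hn)
  finally show ?thesis by simp
qed

lemma proj0_eq: "proj Hn 0 x = sc (e x) 1"
proof -
  have "e (sc (e x) 1) = e (proj Hn 0 x)"
    by (simp add: counit_scale counit_one flip: counit_proj0)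
  then show ?thesis
    using counit_bij_H0 proj_in_Hn scale_in_Hn[OF one_in_H0]
    by (metis bij_betw_def inj_onD)
qed

end

section \<open>Convolution and the maps \<open>\<xi>\<^sub>\<alpha>\<close>\<close>

context cc_graded_hopf
begin

abbreviation unit_counit :: "'h \<Rightarrow> 'h"
  where "unit_counit x \<equiv> sc (e x) 1"

lemma klinear_unit_counit: "klinear sc unit_counit"
  by (simp add: klinear_def counit_add counit_scale scale_left_distrib)

lemma proj0_eq_unit_counit: "proj Hn 0 = unit_counit"
  by (simp add: fun_eq_iff proj0_eq)

lemma tlift2_teq2: "kbilinear sc b \<Longrightarrow> teq2 sc s t \<Longrightarrow> tlift2 sc b s = tlift2 sc b t"
  unfolding tlift2_eq_lincomb by (rule lincomb_teq2)

lemma kbilinear_mult: "klinear sc f \<Longrightarrow> klinear sc g \<Longrightarrow> kbilinear sc (\<lambda>a b. f a * g b)"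
  by (simp add: kbilinear_def klinear_def distrib_left distrib_right scale_mult_left
      mult_scale_commute)

lemma ktrilinear_mult:
  "klinear sc f \<Longrightarrow> klinear sc g \<Longrightarrow> klinear sc h \<Longrightarrow> ktrilinear sc (\<lambda>a b c. f a * g b * h c)"
  by (simp add: ktrilinear_def klinear_def distrib_left distrib_right scale_mult_left
      mult_scale_commute)

lemma lincomb_mult_right: "lincomb sc b t * y = lincomb sc (\<lambda>p. b p * y) t"
  by (simp add: lincomb_def sum_distrib_right scale_mult_left)

lemma lincomb_mult_left: "y * lincomb sc b t = lincomb sc (\<lambda>p. y * b p) t"
  by (simp add: lincomb_def sum_distrib_left scale_mult_right)

lemma lincomb_product:
  "lincomb sc (\<lambda>p. lincomb sc (\<lambda>q. f p * g q) t) s = lincomb sc f s * lincomb sc g t"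
proof -
  have "lincomb sc f s * lincomb sc g t = lincomb sc (\<lambda>p. f p * lincomb sc g t) s"
    by (rule lincomb_mult_right)
  then show ?thesis
    by (simp only: lincomb_mult_left)
qed

lemma klinear_conv:
  assumes "klinear sc f" "klinear sc g"
  shows "klinear sc (conv sc D f g)"
proof -
  have "conv sc D f g (x + y) = conv sc D f g x + conv sc D f g y" for x y
    unfolding conv_def tlift2_teq2[OF kbilinear_mult[OF assms] comul_add]
    by (simp add: tlift2_eq_lincomb lincomb_add)
  moreover have "conv sc D f g (sc c x) = sc c (conv sc D f g x)" for c x
    unfolding conv_def tlift2_teq2[OF kbilinear_mult[OF assms] comul_scale]
    by (simp add: tlift2_eq_lincomb lincomb_map_mult)
  ultimately show ?thesis
    by (simp add: klinear_def)
qed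

lemma conv_unit_counit_left: "klinear sc g \<Longrightarrow> conv sc D unit_counit g x = g x"
proof -
  assume g: "klinear sc g"
  have "conv sc D unit_counit g x = lincomb sc (\<lambda>q. g (sc (e (fst q)) (snd q))) (D x)"
    unfolding conv_def tlift2_eq_lincomb
    by (rule lincomb_cong) (simp add: klinear_scale[OF g] flip: scale_mult_left)
  also have "\<dots> = g x"
    using counit_left[of x] by (simp add: tlift2_eq_lincomb flip: klinear_lincomb[OF g])
  finally show ?thesis .
qed

lemma conv_unit_counit_right: "klinear sc f \<Longrightarrow> conv sc D f unit_counit x = f x"
proof -
  assume f: "klinear sc f"
  have "conv sc D f unit_counit x = lincomb sc (\<lambda>q. f (sc (e (snd q)) (fst q))) (D x)"
    unfolding conv_def tlift2_eq_lincomb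
    by (rule lincomb_cong) (simp add: klinear_scale[OF f] flip: scale_mult_right)
  also have "\<dots> = f x"
    using counit_right[of x] by (simp add: tlift2_eq_lincomb flip: klinear_lincomb[OF f])
  finally show ?thesis .
qed

lemma conv_assoc:
  assumes f: "klinear sc f" and g: "klinear sc g" and h: "klinear sc h"
  shows "conv sc D (conv sc D f g) h x = conv sc D f (conv sc D g h) x"
proof -
  let ?b = "\<lambda>q. f (fst q) * g (fst (snd q)) * h (snd (snd q))"
  have "conv sc D (conv sc D f g) h x = lincomb sc ?b (comul_left D (D x))"
    unfolding lincomb_comul_left conv_def tlift2_eq_lincomb lincomb_mult_right by simp
  also have "\<dots> = lincomb sc ?b (comul_right D (D x))"
    by (rule lincomb_teq3[OF ktrilinear_mult[OF f g h] coassoc])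
  also have "\<dots> = conv sc D f (conv sc D g h) x"
    unfolding lincomb_comul_right conv_def tlift2_eq_lincomb lincomb_mult_left
    by (simp add: mult.assoc)
  finally show ?thesis .
qed

lemma conv_of_mult:
  "klinear sc f \<Longrightarrow> klinear sc g \<Longrightarrow> conv sc D f g (x * y) =
    lincomb sc (\<lambda>p. lincomb sc (\<lambda>q. f (fst p * fst q) * g (snd p * snd q)) (D y)) (D x)"
  unfolding conv_def
  by (subst tlift2_teq2[OF kbilinear_mult comul_mult]) (simp_all add: tlift2_eq_lincomb lincomb_tmult2)

lemma conv_commute:
  assumes "cocommutative sc D" "klinear sc f" "klinear sc g"
  shows "conv sc D f g x = conv sc D g f x"
proof -
  have "conv sc D f g x = tlift2 sc (\<lambda>a b. f a * g b) (tswap2 (D x))"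
    unfolding conv_def
    by (rule tlift2_teq2[OF kbilinear_mult[OF assms(2,3)], symmetric])
      (use assms(1) in \<open>simp add: cocommutative_def\<close>)
  then show ?thesis
    by (simp add: conv_def tlift2_eq_lincomb lincomb_tswap2 mult.commute)
qed

abbreviation \<xi> :: "nat list \<Rightarrow> 'h \<Rightarrow> 'h"
  where "\<xi> w \<equiv> xi sc Hn D e w"

lemma xi_Cons: "\<xi> (a # w) = conv sc D (proj Hn a) (\<xi> w)"
  by (cases w) (simp_all add: fun_eq_iff conv_unit_counit_right klinear_proj)

lemma klinear_xi: "klinear sc (\<xi> w)"
  by (induct w) (simp_all only: xi.simps(1) xi_Cons klinear_unit_counit klinear_conv klinear_proj)

lemma xi_append: "\<xi> (v @ w) x = conv sc D (\<xi> v) (\<xi> w) x"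
proof (induct v arbitrary: x)
  case Nil
  then show ?case by (simp add: conv_unit_counit_left klinear_xi)
next
  case (Cons a v)
  then have "\<xi> (v @ w) = conv sc D (\<xi> v) (\<xi> w)"
    by (simp add: fun_eq_iff)
  then have "\<xi> ((a # v) @ w) = conv sc D (proj Hn a) (conv sc D (\<xi> v) (\<xi> w))"
    by (simp add: xi_Cons)
  also have "\<dots> = conv sc D (conv sc D (proj Hn a) (\<xi> v)) (\<xi> w)"
    by (simp add: fun_eq_iff conv_assoc klinear_proj klinear_xi)
  finally show ?case by (simp add: xi_Cons)
qed

lemma xi_filter_nonzero: "\<xi> (filter (\<lambda>x. x \<noteq> 0) w) = \<xi> w"
proof (induct w)
  case (Cons a w)
  have "\<xi> (0 # w) = \<xi> w"
    by (simp add: xi_Cons proj0_eq_unit_counit fun_eq_iff conv_unit_counit_left klinear_xi)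
  with Cons show ?case by (simp add: xi_Cons)
qed simp

lemma xi_Hn: "x \<in> Hn n \<Longrightarrow> sum_list w \<noteq> n \<Longrightarrow> \<xi> w x = 0"
proof (induct w arbitrary: n x)
  case Nil
  then show ?case by (simp add: counit_Hn_pos)
next
  case (Cons a w)
  obtain t where t: "teq2 sc (D x) t"
    and homog: "\<forall>p\<in>Poly_Mapping.keys t. \<exists>i j. i + j = n \<and> fst p \<in> Hn i \<and> snd p \<in> Hn j"
    using comul_graded[OF Cons(2)] by blast
  have "\<xi> (a # w) x = tlift2 sc (\<lambda>a' b'. proj Hn a a' * \<xi> w b') t"
    unfolding xi_Cons conv_def by (rule tlift2_teq2[OF kbilinear_mult[OF klinear_proj klinear_xi] t])
  also have "\<dots> = lincomb sc (\<lambda>p. proj Hn a (fst p) * \<xi> w (snd p)) t"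
    by (rule tlift2_eq_lincomb)
  also have "\<dots> = 0"
  proof (rule lincomb_eq_0)
    fix p assume "p \<in> Poly_Mapping.keys t"
    then obtain i j where ij: "i + j = n" "fst p \<in> Hn i" "snd p \<in> Hn j"
      using homog by blast
    show "proj Hn a (fst p) * \<xi> w (snd p) = 0"
      using Cons(1)[OF ij(3)] Cons(3) ij(1) by (cases "a = i") (auto simp: proj_Hn[OF ij(2)])
  qed
  finally show ?case .
qed

lemma xi_proj: "\<xi> w (proj Hn c y) = (if sum_list w = c then \<xi> w y else 0)"
proof (cases "sum_list w = c")
  case True
  obtain N where N: "\<forall>n>N. proj Hn n y = 0"
    using proj_eventually_zero by blast
  then have "\<forall>n>max N c. proj Hn n y = 0"
    by simp
  then have "\<xi> w y = (\<Sum>n\<le>max N c. \<xi> w (proj Hn n y))"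
    using sum_proj_atMost klinear_sum[OF klinear_xi] by metis
  also have "\<dots> = (\<Sum>n\<le>max N c. if n = c then \<xi> w (proj Hn c y) else 0)"
    by (rule sum.cong) (auto simp: xi_Hn[OF proj_in_Hn] True)
  finally show ?thesis
    using True by simp
qed (simp add: xi_Hn[OF proj_in_Hn])

end

section \<open>Multiplicativity of \<open>\<xi>\<^sub>\<alpha>\<close>\<close>

fun lists_below :: "nat list \<Rightarrow> nat list set" where
  "lists_below [] = {[]}"
| "lists_below (a # w) = (\<lambda>(i, v). i # v) ` ({..a} \<times> lists_below w)"

lemma finite_lists_below [simp]: "finite (lists_below w)"
  by (induct w) auto

lemma lists_below_iff:
  "\<beta> \<in> lists_below \<alpha> \<longleftrightarrow> length \<beta> = length \<alpha> \<and> (\<forall>j<length \<alpha>. \<beta> ! j \<le> \<alpha> ! j)"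
proof (induct \<alpha> arbitrary: \<beta>)
  case (Cons a \<alpha>)
  then show ?case
    by (cases \<beta>) (auto simp: All_less_Suc2)
qed simp

lemma inj_on_case_prod_Cons: "inj_on (\<lambda>(x, xs). x # xs) A"
  by (auto simp: inj_on_def)

abbreviation list_diff :: "nat list \<Rightarrow> nat list \<Rightarrow> nat list"
  where "list_diff \<alpha> \<beta> \<equiv> map2 (-) \<alpha> \<beta>"

context cc_graded_hopf
begin

lemma proj_mult: "proj Hn c (x * y) = (\<Sum>i\<le>c. proj Hn i x * proj Hn (c - i) y)"
proof -
  obtain N1 where N1: "\<forall>n>N1. proj Hn n x = 0"
    using proj_eventually_zero by blast
  obtain N2 where N2: "\<forall>n>N2. proj Hn n y = 0"
    using proj_eventually_zero by blast
  define N where "N = max c (max N1 N2)"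
  have x: "x = (\<Sum>i\<le>N. proj Hn i x)"
    by (rule sum_proj_atMost) (use N1 N_def in auto)
  have y: "y = (\<Sum>j\<le>N. proj Hn j y)"
    by (rule sum_proj_atMost) (use N2 N_def in auto)
  have "proj Hn c (x * y) = (\<Sum>i\<le>N. \<Sum>j\<le>N. proj Hn c (proj Hn i x * proj Hn j y))"
    by (subst x, subst y) (simp add: sum_product klinear_sum[OF klinear_proj])
  also have "\<dots> = (\<Sum>i\<le>N. \<Sum>j\<le>N.
      if j = c - i then (if i \<le> c then proj Hn i x * proj Hn j y else 0) else 0)"
    by (intro sum.cong refl) (auto simp: proj_Hn[OF mult_in_Hn[OF proj_in_Hn proj_in_Hn]])
  also have "\<dots> = (\<Sum>i\<le>N. if i \<le> c then proj Hn i x * proj Hn (c - i) y else 0)"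
    by (intro sum.cong refl) (auto simp: N_def)
  also have "\<dots> = (\<Sum>i\<in>{i\<in>{..N}. i \<le> c}. proj Hn i x * proj Hn (c - i) y)"
    by (rule sum.inter_filter[symmetric]) simp
  also have "{i\<in>{..N}. i \<le> c} = {..c}"
    by (auto simp: N_def)
  finally show ?thesis .
qed

lemma xi_mult: "\<xi> \<alpha> (x * y) = (\<Sum>\<beta>\<in>lists_below \<alpha>. \<xi> \<beta> x * \<xi> (list_diff \<alpha> \<beta>) y)"
proof (induct \<alpha> arbitrary: x y)
  case Nil
  have "sc (e x * e y) 1 = sc (e x) 1 * sc (e y) 1"
    by (metis mult_1 scale_mult_left scale_scale)
  then show ?case
    by (simp add: counit_mult)
next
  case (Cons a \<alpha>)
  let ?S = "lists_below \<alpha>"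
  have expand: "proj Hn a (p1 * q1) * \<xi> \<alpha> (p2 * q2) =
     (\<Sum>i\<le>a. \<Sum>\<beta>\<in>?S. (proj Hn i p1 * \<xi> \<beta> p2) * (proj Hn (a - i) q1 * \<xi> (list_diff \<alpha> \<beta>) q2))"
    for p1 q1 p2 q2
    unfolding proj_mult Cons sum_product by (intro sum.cong refl) (simp add: mult_ac)
  have "\<xi> (a # \<alpha>) (x * y) = lincomb sc (\<lambda>p. lincomb sc (\<lambda>q.
      proj Hn a (fst p * fst q) * \<xi> \<alpha> (snd p * snd q)) (D y)) (D x)"
    unfolding xi_Cons by (rule conv_of_mult[OF klinear_proj klinear_xi])
  also have "\<dots> = (\<Sum>i\<le>a. \<Sum>\<beta>\<in>?S. lincomb sc (\<lambda>p. lincomb sc (\<lambda>q.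
      (proj Hn i (fst p) * \<xi> \<beta> (snd p)) *
      (proj Hn (a - i) (fst q) * \<xi> (list_diff \<alpha> \<beta>) (snd q))) (D y)) (D x))"
    unfolding expand lincomb_sum_fun ..
  also have "\<dots> = (\<Sum>i\<le>a. \<Sum>\<beta>\<in>?S. \<xi> (i # \<beta>) x * \<xi> ((a - i) # list_diff \<alpha> \<beta>) y)"
    unfolding lincomb_product xi_Cons conv_def tlift2_eq_lincomb ..
  also have "\<dots> = (\<Sum>(i, \<beta>)\<in>{..a} \<times> ?S. \<xi> (i # \<beta>) x * \<xi> ((a - i) # list_diff \<alpha> \<beta>) y)"
    by (simp add: sum.cartesian_product)
  also have "\<dots> = (\<Sum>\<beta>\<in>lists_below (a # \<alpha>). \<xi> \<beta> x * \<xi> (list_diff (a # \<alpha>) \<beta>) y)"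
    unfolding lists_below.simps sum.reindex[OF inj_on_case_prod_Cons] comp_def
    by (simp add: case_prod_beta')
  finally show ?case .
qed

end

section \<open>Composition of the maps \<open>\<xi>\<^sub>\<alpha>\<close>\<close>

fun contingency_tables :: "nat list \<Rightarrow> nat list \<Rightarrow> nat list list set" where
  "contingency_tables \<alpha> [] = (if \<forall>x\<in>set \<alpha>. x = 0 then {[]} else {})"
| "contingency_tables \<alpha> (c # \<gamma>) = (\<lambda>(\<beta>, A). \<beta> # A) `
    (SIGMA \<beta>:{\<beta>\<in>lists_below \<alpha>. sum_list \<beta> = c}. contingency_tables (list_diff \<alpha> \<beta>) \<gamma>)"

lemma finite_contingency_tables [simp]: "finite (contingency_tables \<alpha> \<gamma>)"
proof (induct \<gamma> arbitrary: \<alpha>)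
  case (Cons c \<gamma>)
  then show ?case
    unfolding contingency_tables.simps by (intro finite_imageI finite_SigmaI) simp_all
qed simp

lemma length_colsums [simp]: "length (colsums n A) = n"
  by (simp add: colsums_def)

lemma nth_colsums: "j < n \<Longrightarrow> colsums n A ! j = sum_list (map (\<lambda>r. r ! j) A)"
  by (simp add: colsums_def)

lemma colsums_Nil_eq_iff: "colsums (length \<alpha>) [] = \<alpha> \<longleftrightarrow> (\<forall>x\<in>set \<alpha>. x = 0)"
proof -
  have "colsums (length \<alpha>) [] = replicate (length \<alpha>) 0"
    by (simp add: colsums_def map_replicate_const)
  then show ?thesis
    by (metis in_set_replicate replicate_length_same)
qed

lemma colsums_Cons_eq_iff:
  assumes "length r = length \<alpha>"
  shows "colsums (length \<alpha>) (r # A) = \<alpha> \<longleftrightarrow>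
    r \<in> lists_below \<alpha> \<and> colsums (length \<alpha>) A = list_diff \<alpha> r"
proof -
  let ?C = "colsums (length \<alpha>) A"
  have split: "a + b = c \<longleftrightarrow> a \<le> c \<and> b = c - a" for a b c :: nat
    by linarith
  have "colsums (length \<alpha>) (r # A) = \<alpha> \<longleftrightarrow> (\<forall>j<length \<alpha>. r ! j + ?C ! j = \<alpha> ! j)"
    by (simp add: list_eq_iff_nth_eq nth_colsums)
  also have "\<dots> \<longleftrightarrow> (\<forall>j<length \<alpha>. r ! j \<le> \<alpha> ! j \<and> ?C ! j = \<alpha> ! j - r ! j)"
    by (simp only: split)
  also have "\<dots> \<longleftrightarrow> r \<in> lists_below \<alpha> \<and> ?C = list_diff \<alpha> r"
    using assms by (auto simp: lists_below_iff list_eq_iff_nth_eq)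
  finally show ?thesis .
qed

lemma contingency_tables_iff:
  "A \<in> contingency_tables \<alpha> \<gamma> \<longleftrightarrow>
    (\<forall>r\<in>set A. length r = length \<alpha>) \<and> map sum_list A = \<gamma> \<and> colsums (length \<alpha>) A = \<alpha>"
proof (induct \<gamma> arbitrary: \<alpha> A)
  case Nil
  then show ?case
    using colsums_Nil_eq_iff by auto
next
  case (Cons c \<gamma>)
  show ?case
  proof (cases A)
    case row: (Cons r A')
    have "A \<in> contingency_tables \<alpha> (c # \<gamma>) \<longleftrightarrow>
        r \<in> lists_below \<alpha> \<and> sum_list r = c \<and> A' \<in> contingency_tables (list_diff \<alpha> r) \<gamma>"
      by (auto simp: row)
    also have "\<dots> \<longleftrightarrow> r \<in> lists_below \<alpha> \<and> sum_list r = c \<and> (\<forall>r'\<in>set A'. length r' = length \<alpha>) \<and>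
        map sum_list A' = \<gamma> \<and> colsums (length \<alpha>) A' = list_diff \<alpha> r"
      using Cons.hyps[of A' "list_diff \<alpha> r"] by (auto simp: lists_below_iff)
    also have "\<dots> \<longleftrightarrow> (\<forall>r\<in>set A. length r = length \<alpha>) \<and> map sum_list A = c # \<gamma> \<and>
        colsums (length \<alpha>) A = \<alpha>"
    proof (cases "length r = length \<alpha>")
      case True
      then show ?thesis
        by (simp add: row colsums_Cons_eq_iff) blast
    qed (simp add: row lists_below_iff)
    finally show ?thesis .
  qed auto
qed

lemma sum_list_pos_iff: "0 < sum_list (xs :: nat list) \<longleftrightarrow> (\<exists>x\<in>set xs. 0 < x)"
  by (induct xs) auto
lemma reduced_mat_iff_is_comp:
  assumes "\<forall>r\<in>set A. length r = length \<alpha>" "map sum_list A = \<gamma>" "colsums (length \<alpha>) A = \<alpha>"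
  shows "reduced_mat (length \<alpha>) A \<longleftrightarrow> is_comp \<alpha> \<and> is_comp \<gamma>"
proof -
  have rows: "is_comp \<gamma> \<longleftrightarrow> (\<forall>r\<in>set A. \<exists>x\<in>set r. x \<noteq> 0)"
    unfolding is_comp_def assms(2)[symmetric] by (simp add: sum_list_pos_iff)
  have column: "\<alpha> ! j \<noteq> 0 \<longleftrightarrow> (\<exists>r\<in>set A. r ! j \<noteq> 0)" if "j < length \<alpha>" for j
  proof -
    have "\<alpha> ! j = sum_list (map (\<lambda>r. r ! j) A)"
      using nth_colsums[OF that, of A] assms(3) by simp
    then show ?thesis
      by simp
  qed
  have "is_comp \<alpha> \<longleftrightarrow> (\<forall>j<length \<alpha>. \<alpha> ! j \<noteq> 0)"
    by (simp add: is_comp_def all_set_conv_all_nth)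
  also have "\<dots> \<longleftrightarrow> (\<forall>j<length \<alpha>. \<exists>r\<in>set A. r ! j \<noteq> 0)"
    using column by auto
  finally have columns: "is_comp \<alpha> \<longleftrightarrow> (\<forall>j<length \<alpha>. \<exists>r\<in>set A. r ! j \<noteq> 0)" .
  show ?thesis
    unfolding reduced_mat_def rows columns using assms(1) by blast
qed

lemma red_mats_eq:
  "red_mats \<alpha> \<gamma> = (if is_comp \<alpha> \<and> is_comp \<gamma> then contingency_tables \<alpha> \<gamma> else {})"
proof -
  have "A \<in> red_mats \<alpha> \<gamma> \<longleftrightarrow> A \<in> contingency_tables \<alpha> \<gamma> \<and> is_comp \<alpha> \<and> is_comp \<gamma>" for A
  proof -
    have "reduced_mat (length \<alpha>) A \<Longrightarrow> \<forall>r\<in>set A. length r = length \<alpha>"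
      by (simp add: reduced_mat_def)
    then show ?thesis
      using reduced_mat_iff_is_comp[of A \<alpha> \<gamma>]
      unfolding red_mats_def contingency_tables_iff mem_Collect_eq by blast
  qed
  then show ?thesis
    by auto
qed

context cc_graded_hopf
begin

lemma xi_one: "\<xi> \<alpha> 1 = (if \<forall>x\<in>set \<alpha>. x = 0 then 1 else 0)"
proof (cases "\<forall>x\<in>set \<alpha>. x = 0")
  case True
  then have "filter (\<lambda>x. x \<noteq> 0) \<alpha> = []"
    by (simp add: filter_empty_conv)
  then have "\<xi> \<alpha> = \<xi> []"
    using xi_filter_nonzero[of \<alpha>] by simp
  then show ?thesis
    using True by (simp add: counit_one)
qed (simp add: xi_Hn[OF one_in_H0])

lemma xi_xi: "\<xi> \<alpha> (\<xi> \<gamma> h) = (\<Sum>A\<in>contingency_tables \<alpha> \<gamma>. \<xi> (concat A) h)"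
proof (induct \<gamma> arbitrary: \<alpha> h)
  case Nil
  have "\<xi> \<alpha> (sc (e h) 1) = sc (e h) (\<xi> \<alpha> 1)"
    by (rule klinear_scale[OF klinear_xi])
  then show ?case
    by (cases "\<forall>x\<in>set \<alpha>. x = 0") (auto simp: xi_one)
next
  case (Cons c \<gamma>)
  let ?rows = "{\<beta>\<in>lists_below \<alpha>. sum_list \<beta> = c}"
  let ?tables = "\<lambda>\<beta>. contingency_tables (list_diff \<alpha> \<beta>) \<gamma>"
  have expand: "\<xi> \<alpha> (proj Hn c p1 * \<xi> \<gamma> p2) =
      (\<Sum>\<beta>\<in>?rows. \<Sum>A\<in>?tables \<beta>. \<xi> \<beta> p1 * \<xi> (concat A) p2)" for p1 p2
  proof -
    have "\<xi> \<alpha> (proj Hn c p1 * \<xi> \<gamma> p2) = (\<Sum>\<beta>\<in>lists_below \<alpha>.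
        if sum_list \<beta> = c then (\<Sum>A\<in>?tables \<beta>. \<xi> \<beta> p1 * \<xi> (concat A) p2) else 0)"
      unfolding xi_mult xi_proj Cons by (intro sum.cong refl) (simp add: sum_distrib_left)
    then show ?thesis
      by (simp add: sum.inter_filter)
  qed
  have "\<xi> \<alpha> (\<xi> (c # \<gamma>) h) = lincomb sc (\<lambda>p. \<xi> \<alpha> (proj Hn c (fst p) * \<xi> \<gamma> (snd p))) (D h)"
    unfolding xi_Cons conv_def tlift2_eq_lincomb by (rule klinear_lincomb[OF klinear_xi])
  also have "\<dots> = (\<Sum>\<beta>\<in>?rows. \<Sum>A\<in>?tables \<beta>.
      lincomb sc (\<lambda>p. \<xi> \<beta> (fst p) * \<xi> (concat A) (snd p)) (D h))"
    unfolding expand lincomb_sum_fun ..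
  also have "\<dots> = (\<Sum>\<beta>\<in>?rows. \<Sum>A\<in>?tables \<beta>. \<xi> (concat (\<beta> # A)) h)"
    by (simp add: xi_append conv_def tlift2_eq_lincomb)
  also have "\<dots> = (\<Sum>(\<beta>, A)\<in>(SIGMA \<beta>:?rows. ?tables \<beta>). \<xi> (concat (\<beta> # A)) h)"
    by (rule sum.Sigma) auto
  also have "\<dots> = (\<Sum>A\<in>contingency_tables \<alpha> (c # \<gamma>). \<xi> (concat A) h)"
    unfolding contingency_tables.simps sum.reindex[OF inj_on_case_prod_Cons] comp_def
    by (simp add: case_prod_beta')
  finally show ?case .
qed

end

section \<open>Splittings of a composition and the quasi-shuffle product\<close>

lemma is_comp_Nil [simp]: "is_comp []"
  by (simp add: is_comp_def)

lemma is_comp_Cons [simp]: "is_comp (x # xs) \<longleftrightarrow> 0 < x \<and> is_comp xs"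
  by (simp add: is_comp_def)

lemma is_comp_append [simp]: "is_comp (a @ b) \<longleftrightarrow> is_comp a \<and> is_comp b"
  by (auto simp: is_comp_def)

lemma is_comp_length_le: "is_comp \<alpha> \<Longrightarrow> length \<alpha> \<le> sum_list \<alpha>"
  by (induct \<alpha>) auto

lemma finite_comps_sum_le: "finite {\<alpha>. is_comp \<alpha> \<and> sum_list \<alpha> \<le> n}"
proof (rule finite_subset)
  show "{\<alpha>. is_comp \<alpha> \<and> sum_list \<alpha> \<le> n} \<subseteq> {xs. set xs \<subseteq> {..n} \<and> length xs \<le> n}"
    using is_comp_length_le member_le_sum_list by fastforce
qed (rule finite_lists_length_le, simp)

lemma stuffle_Nil2 [simp]: "stuffle xs [] = {#xs#}"
  by (cases xs) auto

lemma stuffle_is_comp: "\<delta> \<in># stuffle a b \<Longrightarrow> is_comp a \<Longrightarrow> is_comp b \<Longrightarrow> is_comp \<delta>"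
  by (induct a b arbitrary: \<delta> rule: stuffle.induct) auto

lemma count_image_Cons:
  "count (image_mset ((#) x) M) (y # ys) = (if x = y then count M ys else 0)"
  by (induct M) auto

lemma count_image_Cons_Nil: "count (image_mset ((#) x) M) [] = 0"
  by (auto simp: count_eq_zero_iff)

lemma count_stuffle_Nil: "count (stuffle a b) [] = (if a = [] \<and> b = [] then 1 else 0)"
  by (cases a; cases b) (auto simp: count_image_Cons_Nil)

lemma count_stuffle_Cons:
  "count (stuffle a b) (c # \<gamma>) =
    (if a \<noteq> [] \<and> hd a = c then count (stuffle (tl a) b) \<gamma> else 0) +
    (if b \<noteq> [] \<and> hd b = c then count (stuffle a (tl b)) \<gamma> else 0) +
    (if a \<noteq> [] \<and> b \<noteq> [] \<and> hd a + hd b = c then count (stuffle (tl a) (tl b)) \<gamma> else 0)"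
  by (cases a; cases b) (auto simp: count_image_Cons)

text \<open>The multiset of pairs \<open>(\<beta>\<^sup>r\<^sup>e\<^sup>d, (\<gamma> - \<beta>)\<^sup>r\<^sup>e\<^sup>d)\<close> for \<open>\<beta>\<close> below \<open>\<gamma>\<close>, built part by part.\<close>

definition cons_pos :: "nat \<Rightarrow> nat list \<Rightarrow> nat list"
  where "cons_pos i l = (if i = 0 then l else i # l)"

definition cons_pos_pair :: "nat \<Rightarrow> nat \<Rightarrow> nat list \<times> nat list \<Rightarrow> nat list \<times> nat list"
  where "cons_pos_pair c i p = (cons_pos i (fst p), cons_pos (c - i) (snd p))"

fun reduced_splittings :: "nat list \<Rightarrow> (nat list \<times> nat list) multiset" where
  "reduced_splittings [] = {#([], [])#}"
| "reduced_splittings (c # \<gamma>) =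
    (\<Sum>i\<in>{..c}. image_mset (cons_pos_pair c i) (reduced_splittings \<gamma>))"

lemma image_mset_sum: "image_mset f (sum M A) = (\<Sum>i\<in>A. image_mset f (M i))"
  by (induct A rule: infinite_finite_induct) auto

lemma sum_mset_sum: "sum_mset (sum M A) = (\<Sum>i\<in>A. sum_mset (M i))"
  by (induct A rule: infinite_finite_induct) auto

lemma sum_lists_below_eq_sum_reduced_splittings:
  "(\<Sum>\<beta>\<in>lists_below \<gamma>. F (filter (\<lambda>x. x \<noteq> 0) \<beta>, filter (\<lambda>x. x \<noteq> 0) (list_diff \<gamma> \<beta>))) =
    sum_mset (image_mset F (reduced_splittings \<gamma>))"
proof (induct \<gamma> arbitrary: F)
  case (Cons c \<gamma>)
  let ?nz = "filter (\<lambda>x::nat. x \<noteq> 0)"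
  have "(\<Sum>\<beta>\<in>lists_below (c # \<gamma>). F (?nz \<beta>, ?nz (list_diff (c # \<gamma>) \<beta>))) =
      (\<Sum>(i, v)\<in>{..c} \<times> lists_below \<gamma>. F (?nz (i # v), ?nz (list_diff (c # \<gamma>) (i # v))))"
    unfolding lists_below.simps sum.reindex[OF inj_on_case_prod_Cons] comp_def
    by (simp add: case_prod_beta')
  also have "\<dots> = (\<Sum>(i, v)\<in>{..c} \<times> lists_below \<gamma>.
      (\<lambda>p. F (cons_pos_pair c i p)) (?nz v, ?nz (list_diff \<gamma> v)))"
    by (intro sum.cong refl) (clarsimp simp: cons_pos_pair_def cons_pos_def)
  also have "\<dots> = (\<Sum>i\<le>c. \<Sum>v\<in>lists_below \<gamma>.
      (\<lambda>p. F (cons_pos_pair c i p)) (?nz v, ?nz (list_diff \<gamma> v)))"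
    by (rule sum.cartesian_product[symmetric])
  also have "\<dots> = (\<Sum>i\<le>c. sum_mset (image_mset (\<lambda>p. F (cons_pos_pair c i p)) (reduced_splittings \<gamma>)))"
    by (intro sum.cong refl) (rule Cons)
  also have "\<dots> = sum_mset (image_mset F (reduced_splittings (c # \<gamma>)))"
    by (simp add: image_mset_sum sum_mset_sum image_mset.compositionality comp_def)
  finally show ?case .
qed simp

lemma reduced_splittings_is_comp:
  "p \<in># reduced_splittings \<gamma> \<Longrightarrow>
    is_comp (fst p) \<and> is_comp (snd p) \<and> sum_list (fst p) + sum_list (snd p) = sum_list \<gamma>"
proof (induct \<gamma> arbitrary: p)
  case (Cons c \<gamma>)
  then obtain i q where "i \<le> c" "q \<in># reduced_splittings \<gamma>" "p = cons_pos_pair c i q"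
    by (auto simp: set_mset_sum)
  with Cons(1) show ?case
    by (auto simp: cons_pos_pair_def cons_pos_def)
qed simp

lemma count_image_inj: "inj f \<Longrightarrow> count (image_mset f M) (f x) = count M x"
  by (induct M) (auto dest: injD)

lemma count_image_notin: "y \<notin> range f \<Longrightarrow> count (image_mset f M) y = 0"
  by (auto simp: count_eq_zero_iff)

lemma count_image_cons_pos_pair:
  assumes "0 < c" "i \<le> c"
  shows "count (image_mset (cons_pos_pair c i) M) (a, b) =
    (if i = 0 then (if b \<noteq> [] \<and> hd b = c then count M (a, tl b) else 0)
     else if i = c then (if a \<noteq> [] \<and> hd a = c then count M (tl a, b) else 0)
     else if a \<noteq> [] \<and> b \<noteq> [] \<and> hd a = i \<and> hd b = c - i then count M (tl a, tl b) else 0)"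
proof (cases "(a, b) \<in> range (cons_pos_pair c i)")
  case True
  then obtain p where p: "(a, b) = cons_pos_pair c i p"
    by blast
  have "inj (cons_pos_pair c i)"
    by (rule injI) (auto simp: cons_pos_pair_def cons_pos_def prod_eq_iff split: if_splits)
  then have "count (image_mset (cons_pos_pair c i) M) (a, b) = count M p"
    unfolding p by (rule count_image_inj)
  then show ?thesis
    using p assms by (auto simp: cons_pos_pair_def cons_pos_def)
next
  case False
  have "(a, b) = cons_pos_pair c i (a, tl b)" if "i = 0" "b \<noteq> []" "hd b = c"
    using that assms by (cases b) (auto simp: cons_pos_pair_def cons_pos_def)
  moreover have "(a, b) = cons_pos_pair c i (tl a, b)" if "i = c" "a \<noteq> []" "hd a = c"
    using that assms by (cases a) (auto simp: cons_pos_pair_def cons_pos_def)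
  moreover have "(a, b) = cons_pos_pair c i (tl a, tl b)"
    if "i \<noteq> 0" "i \<noteq> c" "a \<noteq> []" "b \<noteq> []" "hd a = i" "hd b = c - i"
    using that assms by (cases a; cases b) (auto simp: cons_pos_pair_def cons_pos_def)
  ultimately have "\<not> (i = 0 \<and> b \<noteq> [] \<and> hd b = c)" "\<not> (i = c \<and> a \<noteq> [] \<and> hd a = c)"
    "\<not> (i \<noteq> 0 \<and> i \<noteq> c \<and> a \<noteq> [] \<and> b \<noteq> [] \<and> hd a = i \<and> hd b = c - i)"
    using False by (metis rangeI)+
  then show ?thesis
    using count_image_notin[OF False] by auto
qed

lemma count_reduced_splittings_Cons:
  assumes "0 < c"
  shows "count (reduced_splittings (c # \<gamma>)) (a, b) =
    (if a \<noteq> [] \<and> hd a = c then count (reduced_splittings \<gamma>) (tl a, b) else 0) +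
    (if b \<noteq> [] \<and> hd b = c then count (reduced_splittings \<gamma>) (a, tl b) else 0) +
    (if a \<noteq> [] \<and> b \<noteq> [] \<and> 0 < hd a \<and> 0 < hd b \<and> hd a + hd b = c
     then count (reduced_splittings \<gamma>) (tl a, tl b) else 0)"
proof -
  let ?T = "\<lambda>i. count (image_mset (cons_pos_pair c i) (reduced_splittings \<gamma>)) (a, b)"
  have "{..c} = insert 0 (insert c {1..<c})"
    using assms by auto
  then have "count (reduced_splittings (c # \<gamma>)) (a, b) = ?T 0 + ?T c + (\<Sum>i\<in>{1..<c}. ?T i)"
    using assms by (simp add: count_sum)
  also have "(\<Sum>i\<in>{1..<c}. ?T i) = (\<Sum>i\<in>{1..<c}. if i = hd a then
      (if a \<noteq> [] \<and> b \<noteq> [] \<and> hd b = c - hd a then count (reduced_splittings \<gamma>) (tl a, tl b) else 0)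
      else 0)"
    by (intro sum.cong refl) (auto simp: count_image_cons_pos_pair[OF assms])
  finally show ?thesis
    using assms by (auto simp: count_image_cons_pos_pair[OF assms] sum.delta')
qed

lemma count_reduced_splittings:
  "is_comp \<gamma> \<Longrightarrow> is_comp a \<Longrightarrow> is_comp b \<Longrightarrow>
    count (reduced_splittings \<gamma>) (a, b) = count (stuffle a b) \<gamma>"
proof (induct \<gamma> arbitrary: a b)
  case Nil
  then show ?case
    by (simp add: count_stuffle_Nil)
next
  case (Cons c \<gamma>)
  have IH: "count (reduced_splittings \<gamma>) (x, y) = count (stuffle x y) \<gamma>"
    if "is_comp x" "is_comp y" for x y
    using Cons that by simp
  have "is_comp (tl a)" "is_comp (tl b)" "a \<noteq> [] \<Longrightarrow> 0 < hd a" "b \<noteq> [] \<Longrightarrow> 0 < hd b"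
    using Cons.prems by (cases a; cases b; simp)+
  moreover have "0 < c"
    using Cons.prems by simp
  ultimately show ?case
    unfolding count_reduced_splittings_Cons[OF \<open>0 < c\<close>] count_stuffle_Cons
    using Cons.prems by (simp add: IH)
qed

section \<open>The map \<open>\<beta>\<^sub>H\<close>\<close>

lemma sum_count_eq_sum_mset:
  assumes "finite P" "set_mset M \<subseteq> P"
  shows "(\<Sum>p\<in>P. of_nat (count M p) * f p) = sum_mset (image_mset f M)"
  using assms(2)
proof (induct M)
  case (add x M)
  then have x: "x \<in> P"
    by simp
  have "(\<Sum>p\<in>P. of_nat (count (add_mset x M) p) * f p) =
      (\<Sum>p\<in>P. of_nat (count M p) * f p + (if p = x then f p else 0))"
    by (intro sum.cong refl) (simp add: distrib_right add.commute)
  also have "\<dots> = (\<Sum>p\<in>P. of_nat (count M p) * f p) + f x"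
    by (simp add: sum.distrib x assms(1))
  finally show ?case
    using add by (simp add: add.commute)
qed simp

lemma qepsP_eq_sum:
  assumes "finite {\<alpha>. u \<alpha> \<noteq> 0}" "finite T" "\<forall>\<alpha>\<in>T. length \<alpha> \<le> 1"
    and "\<And>\<alpha>. u \<alpha> \<noteq> 0 \<Longrightarrow> length \<alpha> \<le> 1 \<Longrightarrow> \<alpha> \<in> T"
  shows "qepsP u = sum u T"
proof -
  let ?f = "\<lambda>\<alpha>. if length \<alpha> \<le> 1 then u \<alpha> else 0"
  have "qepsP u = sum ?f ({\<alpha>. u \<alpha> \<noteq> 0} \<union> T)"
    unfolding qepsP_def by (rule sum.mono_neutral_left) (use assms in auto)
  also have "\<dots> = sum ?f T"
    by (rule sum.mono_neutral_right) (use assms in auto)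
  also have "\<dots> = sum u T"
    using assms(3) by (intro sum.cong) auto
  finally show ?thesis .
qed

lemma fsharp_eq_lincomb: "fsharp sc f t \<alpha> = lincomb sc (\<lambda>q. fst q * f (snd q) \<alpha>) t"
  by (simp add: fsharp_def lincomb_def)

lemma fsharp2_eq_lincomb:
  "fsharp2 sc f s p = lincomb sc (\<lambda>q. fst q * f (fst (snd q)) (fst p) * f (snd (snd q)) (snd p)) s"
  by (simp add: fsharp2_def lincomb_def)

lemma swap_invariant_move:
  assumes "\<And>p a b s. f (p @ a # b # s) = f (p @ b # a # s)"
  shows "f (p @ u @ b # v) = f (p @ b # u @ v)"
proof (induct u arbitrary: p)
  case (Cons x u)
  have "f (p @ (x # u) @ b # v) = f ((p @ [x]) @ b # u @ v)"
    using Cons[of "p @ [x]"] by simp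
  also have "\<dots> = f (p @ b # x # u @ v)"
    using assms[of p x b "u @ v"] by simp
  finally show ?case
    by simp
qed simp

lemma swap_invariant_perm:
  assumes "\<And>p a b s. f (p @ a # b # s) = f (p @ b # a # s)"
  shows "mset \<alpha> = mset \<beta> \<Longrightarrow> f (p @ \<alpha>) = f (p @ \<beta>)"
proof (induct \<beta> arbitrary: \<alpha> p)
  case (Cons b \<beta>)
  then have "b \<in> set \<alpha>"
    by (metis list.set_intros(1) set_mset_mset)
  then obtain u v where \<alpha>: "\<alpha> = u @ b # v"
    by (meson split_list)
  then have "mset (u @ v) = mset \<beta>"
    using Cons(2) by simp
  then have "f ((p @ [b]) @ u @ v) = f ((p @ [b]) @ \<beta>)"
    by (rule Cons(1))
  then show ?case
    unfolding \<alpha> swap_invariant_move[where f = f, OF assms] by simp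
qed simp

context cc_graded_hopf
begin

abbreviation beta :: "'h \<Rightarrow> nat list \<Rightarrow> 'h"
  where "beta \<equiv> betaH sc Hn D e"

lemma beta_comp: "is_comp \<alpha> \<Longrightarrow> beta h \<alpha> = \<xi> \<alpha> h"
  by (simp add: betaH_def)

lemma beta_not_comp: "\<not> is_comp \<alpha> \<Longrightarrow> beta h \<alpha> = 0"
  by (simp add: betaH_def)

lemma beta_add: "beta (x + y) = (\<lambda>\<alpha>. beta x \<alpha> + beta y \<alpha>)"
  by (simp add: fun_eq_iff betaH_def klinear_add[OF klinear_xi])

lemma beta_scale: "beta (sc c x) = (\<lambda>\<alpha>. sc c (beta x \<alpha>))"
  by (simp add: fun_eq_iff betaH_def klinear_scale[OF klinear_xi])

lemma beta_graded: "x \<in> Hn n \<Longrightarrow> sum_list \<alpha> \<noteq> n \<Longrightarrow> beta x \<alpha> = 0"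
  by (simp add: betaH_def xi_Hn)

lemma finite_beta_support: "finite {\<alpha>. beta h \<alpha> \<noteq> 0}"
proof -
  obtain N where N: "\<forall>n>N. proj Hn n h = 0"
    using proj_eventually_zero by blast
  have "\<xi> \<alpha> h = 0" if "N < sum_list \<alpha>" for \<alpha>
  proof -
    have "\<xi> \<alpha> h = (\<Sum>n\<le>N. \<xi> \<alpha> (proj Hn n h))"
      using sum_proj_atMost[OF N] klinear_sum[OF klinear_xi] by metis
    also have "\<dots> = 0"
      using that by (intro sum.neutral) (auto simp: xi_proj)
    finally show ?thesis .
  qed
  then have "{\<alpha>. beta h \<alpha> \<noteq> 0} \<subseteq> {\<alpha>. is_comp \<alpha> \<and> sum_list \<alpha> \<le> N}"
    by (auto simp: betaH_def split: if_splits) (meson not_le)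
  then show ?thesis
    using finite_comps_sum_le finite_subset by blast
qed

lemma beta_one: "beta 1 = qone"
proof
  fix \<alpha>
  have "is_comp \<alpha> \<Longrightarrow> (\<forall>x\<in>set \<alpha>. x = 0) \<longleftrightarrow> \<alpha> = []"
    by (cases \<alpha>) auto
  then show "beta 1 \<alpha> = qone \<alpha>"
    by (cases "is_comp \<alpha>") (auto simp: beta_comp beta_not_comp xi_one qone_def)
qed

lemma beta_mult_apply: "beta (x * y) \<gamma> = qprod (beta x) (beta y) \<gamma>"
proof -
  let ?P = "{(\<alpha>, \<beta>). is_comp \<alpha> \<and> is_comp \<beta> \<and> sum_list \<alpha> + sum_list \<beta> = sum_list \<gamma>}"
  let ?C = "{\<alpha>. is_comp \<alpha> \<and> sum_list \<alpha> \<le> sum_list \<gamma>}"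
  have finite_P: "finite ?P"
    by (rule finite_subset[of _ "?C \<times> ?C"]) (auto simp: finite_comps_sum_le)
  show ?thesis
  proof (cases "is_comp \<gamma>")
    case True
    have "qprod (beta x) (beta y) \<gamma> =
        (\<Sum>p\<in>?P. of_nat (count (reduced_splittings \<gamma>) p) * (\<xi> (fst p) x * \<xi> (snd p) y))"
      unfolding qprod_def
      by (intro sum.cong refl) (auto simp: beta_comp count_reduced_splittings[OF True])
    also have "\<dots> = sum_mset (image_mset (\<lambda>p. \<xi> (fst p) x * \<xi> (snd p) y) (reduced_splittings \<gamma>))"
      by (rule sum_count_eq_sum_mset[OF finite_P]) (use reduced_splittings_is_comp in force)
    also have "\<dots> = (\<Sum>\<beta>\<in>lists_below \<gamma>.
        \<xi> (filter (\<lambda>x. x \<noteq> 0) \<beta>) x * \<xi> (filter (\<lambda>x. x \<noteq> 0) (list_diff \<gamma> \<beta>)) y)"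
      using sum_lists_below_eq_sum_reduced_splittings[where F = "\<lambda>p. \<xi> (fst p) x * \<xi> (snd p) y"]
      by simp
    also have "\<dots> = \<xi> \<gamma> (x * y)"
      unfolding xi_filter_nonzero xi_mult ..
    finally show ?thesis
      using True by (simp add: beta_comp)
  next
    case False
    have "\<gamma> \<notin># stuffle (fst p) (snd p)" if "p \<in> ?P" for p
      using that stuffle_is_comp False by auto
    then have "qprod (beta x) (beta y) \<gamma> = 0"
      unfolding qprod_def by (intro sum.neutral) (simp add: not_in_iff)
    then show ?thesis
      using False by (simp add: beta_not_comp)
  qed
qed

lemma beta_mult: "beta (x * y) = qprod (beta x) (beta y)"
  by (simp add: fun_eq_iff beta_mult_apply)

lemma qcomul_fsharp_beta: "qcomul (fsharp sc beta t) (\<alpha>, \<gamma>) = fsharp2 sc beta (HH_comul D t) (\<alpha>, \<gamma>)"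
proof (cases "is_comp \<alpha> \<and> is_comp \<gamma>")
  case True
  have "fsharp2 sc beta (HH_comul D t) (\<alpha>, \<gamma>) =
      lincomb sc (\<lambda>q. fst q * lincomb sc (\<lambda>r. \<xi> \<alpha> (fst r) * \<xi> \<gamma> (snd r)) (D (snd q))) t"
    unfolding fsharp2_eq_lincomb HH_comul_def lincomb_comul_right
    by (intro lincomb_cong) (simp add: lincomb_mult_left beta_comp True mult.assoc)
  also have "\<dots> = lincomb sc (\<lambda>q. fst q * beta (snd q) (\<alpha> @ \<gamma>)) t"
    by (intro lincomb_cong) (simp add: beta_comp True xi_append conv_def tlift2_eq_lincomb)
  finally show ?thesis
    using True by (simp add: qcomul_def fsharp_eq_lincomb)
next
  case False
  then have "fsharp2 sc beta (HH_comul D t) (\<alpha>, \<gamma>) = 0"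
    unfolding fsharp2_eq_lincomb HH_comul_def lincomb_comul_right
    by (intro lincomb_eq_0) (auto simp: beta_not_comp)
  with False show ?thesis
    by (auto simp: qcomul_def)
qed

lemma beta_kH_coalg_hom: "kH_coalg_hom sc D e beta"
proof -
  have "qcounit (fsharp sc beta t) = HH_counit sc e t" for t
    unfolding qcounit_def HH_counit_def fsharp_eq_lincomb tlift2_eq_lincomb
    by (intro lincomb_cong) (simp add: beta_comp flip: scale_mult_right)
  then show ?thesis
    by (simp add: kH_coalg_hom_def fun_eq_iff qcomul_fsharp_beta)
qed

lemma qepsP_beta: "qepsP (beta h) = h"
proof -
  obtain N where N: "\<forall>n>N. proj Hn n h = 0"
    using proj_eventually_zero by blast
  have beta_single: "beta h [a] = (if 0 < a then proj Hn a h else 0)" for a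
    by (simp add: betaH_def)
  let ?T = "insert [] ((\<lambda>a. [a]) ` {1..N})"
  have "\<alpha> \<in> ?T" if "beta h \<alpha> \<noteq> 0" "length \<alpha> \<le> 1" for \<alpha>
  proof (cases \<alpha>)
    case (Cons a rest)
    with that have "\<alpha> = [a]" "0 < a" "proj Hn a h \<noteq> 0"
      by (simp_all add: beta_single split: if_splits)
    moreover from N \<open>proj Hn a h \<noteq> 0\<close> have "a \<le> N"
      using not_le by blast
    ultimately show ?thesis
      by auto
  qed simp
  then have "qepsP (beta h) = sum (beta h) ?T"
    by (intro qepsP_eq_sum finite_beta_support) auto
  also have "\<dots> = beta h [] + (\<Sum>a\<in>{1..N}. beta h [a])"
    by (subst sum.insert) (auto simp: sum.reindex inj_on_def)
  also have "\<dots> = proj Hn 0 h + (\<Sum>a\<in>{1..N}. proj Hn a h)"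
    by (simp add: beta_single beta_comp proj0_eq)
  also have "\<dots> = (\<Sum>a\<le>N. proj Hn a h)"
    by (simp add: atMost_atLeast0 sum.atLeast_Suc_atMost)
  also have "\<dots> = h"
    using sum_proj_atMost[OF N] by simp
  finally show ?thesis .
qed

lemma beta_beta: "beta (beta h \<gamma>) \<alpha> = qDeltaP' (beta h) (\<alpha>, \<gamma>)"
proof (cases "is_comp \<alpha> \<and> is_comp \<gamma>")
  case True
  have "qDeltaP' (beta h) (\<alpha>, \<gamma>) =
      (\<Sum>A\<in>contingency_tables \<alpha> \<gamma>. beta h (filter (\<lambda>x. x \<noteq> 0) (concat A)))"
    using True by (simp add: qDeltaP'_def red_mats_eq)
  also have "\<dots> = (\<Sum>A\<in>contingency_tables \<alpha> \<gamma>. \<xi> (concat A) h)"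
    by (intro sum.cong refl) (use xi_filter_nonzero in \<open>simp add: beta_comp is_comp_def\<close>)
  finally show ?thesis
    using True by (simp add: beta_comp xi_xi)
next
  case False
  then have "beta (beta h \<gamma>) \<alpha> = 0"
    by (auto simp: betaH_def klinear_zero[OF klinear_xi])
  with False show ?thesis
    by (auto simp: qDeltaP'_def red_mats_eq)
qed

lemma xi_swap:
  assumes "cocommutative sc D"
  shows "\<xi> (p @ a # b # s) = \<xi> (p @ b # a # s)"
proof -
  have ab: "conv sc D (proj Hn a) (proj Hn b) = conv sc D (proj Hn b) (proj Hn a)"
    by (simp add: fun_eq_iff conv_commute[OF assms] klinear_proj)
  have "\<xi> (x # y # s) z = conv sc D (conv sc D (proj Hn x) (proj Hn y)) (\<xi> s) z" for x y z
    using xi_append[of "[x, y]" s] by simp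
  then have swap: "\<xi> (a # b # s) = \<xi> (b # a # s)"
    by (simp only: fun_eq_iff ab) simp
  show ?thesis
    by (simp only: fun_eq_iff xi_append swap) simp
qed

lemma beta_in_H_Lambda:
  assumes "cocommutative sc D"
  shows "in_H_Lambda (beta h)"
proof -
  have perm: "mset \<alpha> = mset \<beta> \<Longrightarrow> \<xi> ([] @ \<alpha>) = \<xi> ([] @ \<beta>)" for \<alpha> \<beta>
    by (rule swap_invariant_perm[where f = \<xi>]) (rule xi_swap[OF assms])
  have "\<xi> \<alpha> = \<xi> (sorted_list_of_multiset (mset \<alpha>))" for \<alpha>
    using perm[of \<alpha> "sorted_list_of_multiset (mset \<alpha>)"] by simp
  then show ?thesis
    unfolding in_H_Lambda_def
    by (intro exI[of _ "\<lambda>m. \<xi> (sorted_list_of_multiset m) h"]) (simp add: beta_comp)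
qed

end

theorem theorem5p7:
  fixes sc :: "'k::comm_ring_1 \<Rightarrow> 'h::comm_ring_1 \<Rightarrow> 'h"
    and Hn :: "nat \<Rightarrow> 'h set"
    and D :: "'h \<Rightarrow> ('h \<times> 'h) \<Rightarrow>\<^sub>0 'k"
    and e :: "'h \<Rightarrow> 'k"
  assumes H: "comm_conn_graded_hopf sc Hn D e"
  shows "(\<forall>h. finite {\<alpha>. betaH sc Hn D e h \<alpha> \<noteq> 0})
    \<and> ((\<forall>x y. betaH sc Hn D e (x + y) = (\<lambda>\<alpha>. betaH sc Hn D e x \<alpha> + betaH sc Hn D e y \<alpha>))
       \<and> (\<forall>c x. betaH sc Hn D e (sc c x) = (\<lambda>\<alpha>. sc c (betaH sc Hn D e x \<alpha>)))
       \<and> (\<forall>x y. betaH sc Hn D e (x * y) = qprod (betaH sc Hn D e x) (betaH sc Hn D e y))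
       \<and> betaH sc Hn D e 1 = qone
       \<and> kH_coalg_hom sc D e (betaH sc Hn D e)
       \<and> (\<forall>n x \<alpha>. x \<in> Hn n \<longrightarrow> sum_list \<alpha> \<noteq> n \<longrightarrow> betaH sc Hn D e x \<alpha> = 0))
    \<and> (\<forall>h. qepsP (betaH sc Hn D e h) = h)
    \<and> (\<forall>h \<alpha> \<gamma>. betaH sc Hn D e (betaH sc Hn D e h \<gamma>) \<alpha> = qDeltaP' (betaH sc Hn D e h) (\<alpha>, \<gamma>))
    \<and> (cocommutative sc D \<longrightarrow> (\<forall>h. in_H_Lambda (betaH sc Hn D e h)))"
proof -
  interpret cc_graded_hopf sc Hn D e
    using H by (rule cc_graded_hopf.intro)
  show ?thesis
    using finite_beta_support beta_add beta_scale beta_mult beta_one beta_kH_coalg_hom beta_graded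
      qepsP_beta beta_beta beta_in_H_Lambda
    by blast
qed

end
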